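(* Let $\mathfrak{h}$ be a compact Lie algebra with an $\operatorname{ad}(\mathfrak{h})$-invariant inner product, $(\pi,V)$ a faithful real representation of $\mathfrak{h}$ with $\bigcap_{x\in\mathfrak{h}}\ker\pi(x)=0$, and $\langle\cdot,\cdot\rangle_V$ a $\pi(\mathfrak{h})$-invariant inner product on $V$. Let $\mathfrak{n}=\mathfrak{h}\oplus V$ with $\mathfrak{h}$ central, $[V,V]\subset\mathfrak{h}$ and $\langle[v,w],x\rangle=\langle\pi(x)v,w\rangle_V$ for $x\in\mathfrak{h}$, $v,w\in V$, with the orthogonal sum inner product. Let $s\in\{0,1\}$ with $\dim\mathfrak{h}\equiv s\pmod 2$, and consider $\mathbb{R}^s\oplus\mathfrak{n}$ with $\mathbb{R}^s$ central and orthogonal to $\mathfrak{n}$. Then the following are equivalent: (i) $\mathbb{R}^s\oplus\mathfrak{n}$ admits an abelian complex structure which is orthogonal for the inner product; (ii) every irreducible subrepresentation of $V$ of real type occurs in $V$ with even multiplicity.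
   Context: A complex structure $J$ (linear, $J^2=-I$, $[x,y]+J([Jx,y]+[x,Jy])-[Jx,Jy]=0$) is abelian if $[Jx,Jy]=[x,y]$ for all $x,y$, and orthogonal if $\langle Jx,Jy\rangle=\langle x,y\rangle$. An irreducible real representation $W$ of $\mathfrak{h}$ is of real, complex or quaternionic type according as its commutant $\operatorname{End}_{\mathfrak{h}}(W)$ is $\mathbb{R}$, $\mathbb{C}$ or $\mathbb{H}$; the multiplicity of $W$ in $V$ is the number of copies of $W$ in a decomposition of $V$ into irreducibles. (These Lie algebras $\mathfrak{n}$ are exactly the Lie algebras of naturally reductive $2$-step nilmanifolds without Euclidean factor.) *)

theory Defs
  imports "HOL-Analysis.Analysis"
begin

text \<open>A real Lie algebra structure on a finite-dimensional inner product space 'h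
  whose bracket is ad-invariant for the inner product of 'h.  (A real Lie algebra
  admitting an ad-invariant inner product is exactly a compact Lie algebra.)\<close>

definition lie_algebra :: "('h::real_vector \<Rightarrow> 'h \<Rightarrow> 'h) \<Rightarrow> bool" where
  "lie_algebra br \<longleftrightarrow>
     (\<forall>x. linear (br x)) \<and> (\<forall>y. linear (\<lambda>x. br x y)) \<and>
     (\<forall>x. br x x = 0) \<and>
     (\<forall>x y z. br x (br y z) + br y (br z x) + br z (br x y) = 0)"

definition ad_invariant :: "('h::real_inner \<Rightarrow> 'h \<Rightarrow> 'h) \<Rightarrow> bool" where
  "ad_invariant br \<longleftrightarrow> (\<forall>x y z. inner (br x y) z + inner y (br x z) = 0)"

definition representation ::
  "('h::real_vector \<Rightarrow> 'h \<Rightarrow> 'h) \<Rightarrow> ('h \<Rightarrow> 'v::real_vector \<Rightarrow> 'v) \<Rightarrow> bool" where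
  "representation br \<pi> \<longleftrightarrow>
     (\<forall>x. linear (\<pi> x)) \<and> (\<forall>v. linear (\<lambda>x. \<pi> x v)) \<and>
     (\<forall>x y v. \<pi> (br x y) v = \<pi> x (\<pi> y v) - \<pi> y (\<pi> x v))"

definition faithful :: "('h::real_vector \<Rightarrow> 'v::real_vector \<Rightarrow> 'v) \<Rightarrow> bool" where
  "faithful \<pi> \<longleftrightarrow> (\<forall>x. (\<forall>v. \<pi> x v = 0) \<longrightarrow> x = 0)"

definition no_trivial_part :: "('h \<Rightarrow> 'v::real_vector \<Rightarrow> 'v) \<Rightarrow> bool" where
  "no_trivial_part \<pi> \<longleftrightarrow> (\<forall>v. (\<forall>x. \<pi> x v = 0) \<longrightarrow> v = 0)"

definition rep_invariant_inner :: "('h \<Rightarrow> 'v::real_inner \<Rightarrow> 'v) \<Rightarrow> bool" where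
  "rep_invariant_inner \<pi> \<longleftrightarrow> (\<forall>x v w. inner (\<pi> x v) w + inner v (\<pi> x w) = 0)"

definition invariant_subspace :: "('h \<Rightarrow> 'v::real_vector \<Rightarrow> 'v) \<Rightarrow> 'v set \<Rightarrow> bool" where
  "invariant_subspace \<pi> U \<longleftrightarrow> subspace U \<and> (\<forall>x. \<forall>u\<in>U. \<pi> x u \<in> U)"

definition irreducible_subrep :: "('h \<Rightarrow> 'v::real_vector \<Rightarrow> 'v) \<Rightarrow> 'v set \<Rightarrow> bool" where
  "irreducible_subrep \<pi> U \<longleftrightarrow> invariant_subspace \<pi> U \<and> U \<noteq> {0} \<and>
     (\<forall>U'. invariant_subspace \<pi> U' \<and> U' \<subseteq> U \<longrightarrow> U' = {0} \<or> U' = U)"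

text \<open>Equivariant linear maps U \<rightarrow> U' (given by a linear map of the ambient space).\<close>
definition intertwiner :: "('h \<Rightarrow> 'v::real_vector \<Rightarrow> 'v) \<Rightarrow> 'v set \<Rightarrow> 'v set \<Rightarrow> ('v \<Rightarrow> 'v) \<Rightarrow> bool" where
  "intertwiner \<pi> U U' f \<longleftrightarrow> linear f \<and> f ` U \<subseteq> U' \<and> (\<forall>x. \<forall>u\<in>U. f (\<pi> x u) = \<pi> x (f u))"

definition rep_isomorphic :: "('h \<Rightarrow> 'v::real_vector \<Rightarrow> 'v) \<Rightarrow> 'v set \<Rightarrow> 'v set \<Rightarrow> bool" where
  "rep_isomorphic \<pi> U U' \<longleftrightarrow> (\<exists>f. intertwiner \<pi> U U' f \<and> bij_betw f U U')"

definition real_type :: "('h \<Rightarrow> 'v::real_vector \<Rightarrow> 'v) \<Rightarrow> 'v set \<Rightarrow> bool" where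
  "real_type \<pi> U \<longleftrightarrow> (\<forall>f. intertwiner \<pi> U U f \<longrightarrow> (\<exists>c::real. \<forall>u\<in>U. f u = c *\<^sub>R u))"

text \<open>A decomposition of the whole space V into irreducible subrepresentations
  (an internal direct sum: the summands span V and their dimensions add up to dim V).\<close>
definition irreducible_decomposition ::
  "('h \<Rightarrow> 'v::euclidean_space \<Rightarrow> 'v) \<Rightarrow> 'v set list \<Rightarrow> bool" where
  "irreducible_decomposition \<pi> Us \<longleftrightarrow>
     (\<forall>U\<in>set Us. irreducible_subrep \<pi> U) \<and>
     span (\<Union>(set Us)) = UNIV \<and>
     (\<Sum>i<length Us. dim (Us ! i)) = DIM('v)"

definition multiplicity_in :: "('h \<Rightarrow> 'v::real_vector \<Rightarrow> 'v) \<Rightarrow> 'v set list \<Rightarrow> 'v set \<Rightarrow> nat" where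
  "multiplicity_in \<pi> Us W = card {i. i < length Us \<and> rep_isomorphic \<pi> (Us ! i) W}"

definition vbracket :: "('h::real_inner \<Rightarrow> 'v::real_inner \<Rightarrow> 'v) \<Rightarrow> 'v \<Rightarrow> 'v \<Rightarrow> 'h" where
  "vbracket \<pi> v w = (THE z. \<forall>x. inner z x = inner (\<pi> x v) w)"

text \<open>Elements of R^s + h + V are modelled in real \<times> 'h \<times> 'v (product inner product,
  i.e. the orthogonal sum); the real factor is R^1 when s = 1 and is forced to 0 when s = 0.
  The factors R^s and h are central.\<close>
definition nbracket :: "('h::real_inner \<Rightarrow> 'v::real_inner \<Rightarrow> 'v) \<Rightarrow>
    real \<times> 'h \<times> 'v \<Rightarrow> real \<times> 'h \<times> 'v \<Rightarrow> real \<times> 'h \<times> 'v" where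
  "nbracket \<pi> p q = (0, vbracket \<pi> (snd (snd p)) (snd (snd q)), 0)"

definition ncarrier :: "nat \<Rightarrow> (real \<times> 'h::real_vector \<times> 'v::real_vector) set" where
  "ncarrier s = {p. s = 0 \<longrightarrow> fst p = 0}"

definition complex_structure_on ::
  "('a::real_vector) set \<Rightarrow> ('a \<Rightarrow> 'a \<Rightarrow> 'a) \<Rightarrow> ('a \<Rightarrow> 'a) \<Rightarrow> bool" where
  "complex_structure_on N br J \<longleftrightarrow>
     linear J \<and> J ` N \<subseteq> N \<and> (\<forall>u\<in>N. J (J u) = - u) \<and>
     (\<forall>u\<in>N. \<forall>w\<in>N. br u w + J (br (J u) w + br u (J w)) - br (J u) (J w) = 0)"

definition abelian_cs :: "('a::real_vector) set \<Rightarrow> ('a \<Rightarrow> 'a \<Rightarrow> 'a) \<Rightarrow> ('a \<Rightarrow> 'a) \<Rightarrow> bool" where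
  "abelian_cs N br J \<longleftrightarrow> (\<forall>u\<in>N. \<forall>w\<in>N. br (J u) (J w) = br u w)"

definition orthogonal_cs :: "('a::real_inner) set \<Rightarrow> ('a \<Rightarrow> 'a) \<Rightarrow> bool" where
  "orthogonal_cs N J \<longleftrightarrow> (\<forall>u\<in>N. \<forall>w\<in>N. inner (J u) (J w) = inner u w)"

end

(* An orthogonal abelian complex structure J on R^s + h + V preserves the centre R^s + h: if c is
   central then [J c, y] = -[c, J y] = 0, and V has no trivial summand.  Being orthogonal, J then
   preserves V as well, and abelianness of J says exactly that its restriction to V is an
   orthogonal complex structure commuting with pi.  Conversely, such a structure on V extends by
   any orthogonal complex structure on the even-dimensional centre.

   So everything reduces to: V carries a pi-equivariant orthogonal complex structure iff every
   irreducible W of real type has even multiplicity.  Given such a J, composing with J makes the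
   space of equivariant maps W -> V, whose dimension is the multiplicity of W, into a complex vector
   space.  Conversely, split V orthogonally into irreducibles.  A summand U of complex or
   quaternionic type has a non-scalar self-intertwiner; its skew part, normalised, is an
   equivariant complex structure on U.  Summands of real type come in isomorphic pairs U, U', and
   for an isometric isomorphism phi : U -> U' the map (a, b) |-> (-phi^-1 b, phi a) is an
   equivariant complex structure on U + U'. *)

theory Submission
  imports Defs
begin

section \<open>Orthogonal complements and projections\<close>

lemma orthogonal_comp_iff: "x \<in> U\<^sup>\<bottom> \<longleftrightarrow> (\<forall>u\<in>U. inner x u = 0)"
  by (auto simp: orthogonal_comp_def orthogonal_def inner_commute)

lemma eq_if_inner_eq_on_subspace:
  fixes a b :: "'a::real_inner"
  assumes "subspace U" "a \<in> U" "b \<in> U" "\<And>w. w \<in> U \<Longrightarrow> inner a w = inner b w"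
  shows "a = b"
proof -
  have "a - b \<in> U" using assms by (simp add: subspace_diff)
  then have "inner (a - b) (a - b) = 0" using assms(4) by (simp add: inner_diff_left)
  then show ?thesis by simp
qed

definition orthogonal_projection :: "'a::real_inner set \<Rightarrow> ('a \<Rightarrow> 'a) \<Rightarrow> bool" where
  "orthogonal_projection U P \<longleftrightarrow> linear P \<and> (\<forall>x. P x \<in> U) \<and> (\<forall>x. x - P x \<in> U\<^sup>\<bottom>)"

lemma orthogonal_projection_exists:
  fixes U :: "'a::euclidean_space set"
  assumes "subspace U"
  obtains P where "orthogonal_projection U P"
proof -
  obtain B where B: "B \<subseteq> U" "pairwise orthogonal B" "\<And>x. x \<in> B \<Longrightarrow> norm x = 1"
    "independent B" "span B = U"
    using orthonormal_basis_subspace[OF assms] by metis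
  have fin: "finite B" using B(4) by (simp add: finiteI_independent)
  have onb: "inner b b' = (if b = b' then 1 else 0)" if "b \<in> B" "b' \<in> B" for b b'
    using B(2,3) that norm_eq_1 by (auto simp: pairwise_def orthogonal_def)
  define P where "P x = (\<Sum>b\<in>B. inner x b *\<^sub>R b)" for x
  have "linear P"
    by (rule linearI) (auto simp: P_def inner_add_left scaleR_add_left sum.distrib scaleR_sum_right)
  moreover have "P x \<in> U" for x
    unfolding P_def using B(1) assms by (intro subspace_sum subspace_mul) auto
  moreover have "x - P x \<in> U\<^sup>\<bottom>" for x
  proof -
    have "inner (x - P x) b' = 0" if "b' \<in> B" for b'
      using that fin onb
      by (simp add: P_def inner_diff_left inner_sum_left if_distrib[of "(*) _"] cong: if_cong)
    then have "orthogonal (x - P x) u" if "u \<in> span B" for u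
      using orthogonal_to_span[OF that] by (auto simp: orthogonal_def)
    then show ?thesis using B(5) by (auto simp: orthogonal_comp_iff orthogonal_def)
  qed
  ultimately have "orthogonal_projection U P" by (simp add: orthogonal_projection_def)
  then show thesis by (rule that)
qed

lemma orthogonal_projection_inner:
  assumes "orthogonal_projection U P" "u \<in> U"
  shows "inner (P x) u = inner x u"
proof -
  have "x - P x \<in> U\<^sup>\<bottom>" using assms(1) by (simp add: orthogonal_projection_def)
  then have "inner (x - P x) u = 0" using assms(2) by (simp add: orthogonal_comp_iff)
  then show ?thesis by (simp add: inner_diff_left)
qed

lemma orthogonal_projection_id:
  assumes "orthogonal_projection U P" "subspace U" "u \<in> U"
  shows "P u = u"
proof (rule eq_if_inner_eq_on_subspace[OF assms(2) _ assms(3)])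
  show "P u \<in> U" using assms(1) by (simp add: orthogonal_projection_def)
qed (rule orthogonal_projection_inner[OF assms(1)])

lemma orthogonal_projection_zero:
  assumes "orthogonal_projection U P" "v \<in> U\<^sup>\<bottom>"
  shows "P v = 0"
proof -
  have "P v \<in> U" using assms(1) by (simp add: orthogonal_projection_def)
  then have "inner (P v) (P v) = inner v (P v)" by (rule orthogonal_projection_inner[OF assms(1)])
  also have "\<dots> = 0" using assms(2) \<open>P v \<in> U\<close> by (simp add: orthogonal_comp_iff)
  finally show ?thesis by simp
qed

lemma sums_orthogonal_comp_Int:
  fixes U S :: "'a::euclidean_space set"
  assumes "subspace U" "subspace S" "U \<subseteq> S"
  shows "{x + y | x y. x \<in> U \<and> y \<in> S \<inter> U\<^sup>\<bottom>} = S"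
proof (intro subset_antisym subsetI)
  fix v assume "v \<in> S"
  obtain P where P: "orthogonal_projection U P" using orthogonal_projection_exists[OF assms(1)] .
  then have "P v \<in> U" "v - P v \<in> U\<^sup>\<bottom>" by (auto simp: orthogonal_projection_def)
  moreover have "v - P v \<in> S" using \<open>v \<in> S\<close> \<open>P v \<in> U\<close> assms by (auto intro: subspace_diff)
  ultimately show "v \<in> {x + y | x y. x \<in> U \<and> y \<in> S \<inter> U\<^sup>\<bottom>}"
    by (intro CollectI exI[of _ "P v"] exI[of _ "v - P v"]) auto
qed (use assms in \<open>auto intro: subspace_add\<close>)

lemma dim_orthogonal_comp_Int:
  fixes U S :: "'a::euclidean_space set"
  assumes "subspace U" "subspace S" "U \<subseteq> S"
  shows "dim U + dim (S \<inter> U\<^sup>\<bottom>) = dim S"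
proof -
  have "{y \<in> S. \<forall>x\<in>U. orthogonal x y} = S \<inter> U\<^sup>\<bottom>" by (auto simp: orthogonal_comp_def)
  then show ?thesis using dim_subspace_orthogonal_to_vectors[OF assms] by simp
qed

lemma bilinear_form_representation:
  fixes U :: "'a::euclidean_space set"
  assumes "subspace U" and lin: "\<And>w. linear (\<lambda>u. \<beta> u w)" "\<And>u. linear (\<beta> u)"
  obtains T where "linear T" "\<And>u. T u \<in> U" "\<And>u w. w \<in> U \<Longrightarrow> inner (T u) w = \<beta> u w"
proof -
  obtain P where P: "orthogonal_projection U P" using orthogonal_projection_exists[OF assms(1)] .
  define R where "R u = (\<Sum>b\<in>Basis. \<beta> u b *\<^sub>R b)" for u
  have "linear R"
    by (rule linearI) (simp_all add: R_def linear_add[OF lin(1)] linear_scale[OF lin(1)]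
        scaleR_add_left sum.distrib scaleR_sum_right)
  then have "linear (P \<circ> R)" using P by (simp add: orthogonal_projection_def linear_compose)
  moreover have "(P \<circ> R) u \<in> U" for u using P by (simp add: orthogonal_projection_def)
  moreover have "inner ((P \<circ> R) u) w = \<beta> u w" if "w \<in> U" for u w
  proof -
    have "inner ((P \<circ> R) u) w = inner (R u) w"
      using orthogonal_projection_inner[OF P that] by simp
    also have "\<dots> = (\<Sum>b\<in>Basis. \<beta> u b * inner b w)"
      by (simp add: R_def inner_sum_left)
    also have "\<dots> = (\<Sum>b\<in>Basis. inner w b * \<beta> u b)"
      by (intro sum.cong) (simp_all add: inner_commute)
    also have "\<dots> = \<beta> u (\<Sum>b\<in>Basis. inner w b *\<^sub>R b)"
      by (simp add: linear_sum[OF lin(2)] linear_scale[OF lin(2)])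
    finally show ?thesis by (simp add: euclidean_representation)
  qed
  ultimately show thesis by (rule that)
qed

section \<open>Schur's lemma for orthogonal representations\<close>

lemma irreducible_subrepD:
  assumes "irreducible_subrep \<pi> U"
  shows "subspace U" "U \<noteq> {0}" "\<And>x u. u \<in> U \<Longrightarrow> \<pi> x u \<in> U" "invariant_subspace \<pi> U"
    "\<And>U'. invariant_subspace \<pi> U' \<Longrightarrow> U' \<subseteq> U \<Longrightarrow> U' = {0} \<or> U' = U"
  using assms unfolding irreducible_subrep_def invariant_subspace_def by auto

lemma rep_invariant_innerD:
  assumes "rep_invariant_inner \<pi>"
  shows "inner (\<pi> x a) b = - inner a (\<pi> x b)"
  using assms unfolding rep_invariant_inner_def by (simp add: eq_neg_iff_add_eq_0)

lemma linear_coeff_eq_0_if_quadratic_nonneg: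
  fixes a b :: real
  assumes "b \<ge> 0" "\<And>t. 2 * t * a + t\<^sup>2 * b \<ge> 0"
  shows "a = 0"
proof (rule ccontr)
  assume "a \<noteq> 0"
  define t where "t = - a / (b + 1)"
  have b1: "b + 1 > 0" using assms by simp
  have "(b + 1)\<^sup>2 * (2 * t * a + t\<^sup>2 * b) = 2 * a * (t * (b + 1)) * (b + 1) + b * (t * (b + 1))\<^sup>2"
    by (simp add: power2_eq_square algebra_simps)
  also have "t * (b + 1) = - a" unfolding t_def using b1 by simp
  finally have "(b + 1)\<^sup>2 * (2 * t * a + t\<^sup>2 * b) = a\<^sup>2 * (- b - 2)"
    by (simp add: power2_eq_square algebra_simps)
  moreover have "a\<^sup>2 * (- b - 2) < 0" using \<open>a \<noteq> 0\<close> assms(1) by (intro mult_pos_neg) auto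
  moreover have "(b + 1)\<^sup>2 * (2 * t * a + t\<^sup>2 * b) \<ge> 0" using assms(2)[of t] b1 by simp
  ultimately show False by linarith
qed

lemma nonneg_symmetric_operator_eq_0:
  fixes A :: "'a::real_inner \<Rightarrow> 'a"
  assumes U: "subspace U" and A: "linear A" "\<And>u. u \<in> U \<Longrightarrow> A u \<in> U"
    and sym: "\<And>u w. u \<in> U \<Longrightarrow> w \<in> U \<Longrightarrow> inner (A u) w = inner u (A w)"
    and nonneg: "\<And>u. u \<in> U \<Longrightarrow> inner (A u) u \<ge> 0"
    and v: "v \<in> U" "inner (A v) v = 0"
  shows "A v = 0"
proof (rule eq_if_inner_eq_on_subspace[OF U A(2)[OF v(1)] subspace_0[OF U]])
  fix w assume w: "w \<in> U"
  show "inner (A v) w = inner 0 w"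
  proof (simp, rule linear_coeff_eq_0_if_quadratic_nonneg)
    show "inner (A w) w \<ge> 0" using nonneg w .
    fix t :: real
    have "inner (A (v + t *\<^sub>R w)) (v + t *\<^sub>R w) =
          inner (A v) v + t * inner (A v) w + t * inner (A w) v + t\<^sup>2 * inner (A w) w"
      by (simp add: linear_add[OF A(1)] linear_scale[OF A(1)] inner_add_left inner_add_right
          power2_eq_square algebra_simps)
    also have "inner (A w) v = inner (A v) w" using sym[OF v(1) w] by (simp add: inner_commute)
    finally show "2 * t * inner (A v) w + t\<^sup>2 * inner (A w) w \<ge> 0"
      using nonneg[of "v + t *\<^sub>R w"] v w U by (simp add: subspace_add subspace_mul)
  qed
qed

lemma symmetric_operator_eigenvector_exists:
  fixes T :: "'a::euclidean_space \<Rightarrow> 'a"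
  assumes U: "subspace U" "U \<noteq> {0}" and T: "linear T" "\<And>u. u \<in> U \<Longrightarrow> T u \<in> U"
    and sym: "\<And>u w. u \<in> U \<Longrightarrow> w \<in> U \<Longrightarrow> inner (T u) w = inner u (T w)"
  obtains v c where "v \<in> U" "v \<noteq> 0" "T v = c *\<^sub>R v"
proof -
  define S where "S = U \<inter> sphere 0 1"
  have "compact S" unfolding S_def using closed_subspace[OF U(1)] by (intro closed_Int_compact) auto
  obtain u0 where u0: "u0 \<in> U" "u0 \<noteq> 0" using U subspace_0 by blast
  then have "u0 /\<^sub>R norm u0 \<in> S" using U(1) by (auto simp: S_def subspace_mul)
  then have "S \<noteq> {}" by blast
  have "continuous_on S (\<lambda>u. inner (T u) u)"
    using linear_continuous_on[of T] T(1) by (intro continuous_intros) (auto simp: linear_conv_bounded_linear)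
  then obtain v where v: "v \<in> S" "\<And>y. y \<in> S \<Longrightarrow> inner (T y) y \<le> inner (T v) v"
    using continuous_attains_sup[OF \<open>compact S\<close> \<open>S \<noteq> {}\<close>] by blast
  define c where "c = inner (T v) v"
  have vU: "v \<in> U" and nv: "norm v = 1" using v(1) by (auto simp: S_def)
  \<comment> \<open>The maximum of the Rayleigh quotient makes \<open>c - T\<close> nonnegative on \<open>U\<close>, and \<open>v\<close> isotropic for it.\<close>
  have le: "inner (T u) u \<le> c * inner u u" if "u \<in> U" for u
  proof (cases "u = 0")
    case True then show ?thesis by (simp add: linear_0[OF T(1)])
  next
    case False
    have "u /\<^sub>R norm u \<in> S" using that False U(1) by (auto simp: S_def subspace_mul)
    then have "inner (T (u /\<^sub>R norm u)) (u /\<^sub>R norm u) \<le> c" using v(2) c_def by blast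
    then have "inner (T u) u / (norm u)\<^sup>2 \<le> c"
      by (simp add: linear_scale[OF T(1)] power2_eq_square field_simps)
    then show ?thesis using False by (simp add: divide_le_eq dot_square_norm mult.commute)
  qed
  define A where "A u = c *\<^sub>R u - T u" for u
  have "linear A"
    by (rule linearI) (auto simp: A_def linear_add[OF T(1)] linear_scale[OF T(1)] algebra_simps)
  then have "A v = 0"
  proof (rule nonneg_symmetric_operator_eq_0[OF U(1)])
    show "A u \<in> U" if "u \<in> U" for u using that T(2) U(1) by (simp add: A_def subspace_diff subspace_mul)
    show "inner (A u) w = inner u (A w)" if "u \<in> U" "w \<in> U" for u w
      using sym[OF that] by (simp add: A_def inner_diff_left inner_diff_right inner_commute)
    show "inner (A u) u \<ge> 0" if "u \<in> U" for u using le[OF that] by (simp add: A_def inner_diff_left)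
    show "inner (A v) v = 0" using nv by (simp add: A_def inner_diff_left c_def dot_square_norm)
  qed fact
  then have "T v = c *\<^sub>R v" by (simp add: A_def)
  moreover have "v \<noteq> 0" using nv by auto
  ultimately show thesis using that vU by blast
qed

lemma intertwiner_zero_or_bij:
  fixes \<pi> :: "'h \<Rightarrow> 'v::euclidean_space \<Rightarrow> 'v"
  assumes W: "irreducible_subrep \<pi> W" and U: "irreducible_subrep \<pi> U" and pl: "\<And>x. linear (\<pi> x)"
    and g: "intertwiner \<pi> W U g"
  shows "(\<forall>w\<in>W. g w = 0) \<or> bij_betw g W U"
proof -
  have gl: "linear g" and gWU: "g ` W \<subseteq> U" and gc: "\<And>x u. u \<in> W \<Longrightarrow> g (\<pi> x u) = \<pi> x (g u)"
    using g by (auto simp: intertwiner_def)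
  note Ws = irreducible_subrepD(1)[OF W]
  define K where "K = {w\<in>W. g w = 0}"
  have "invariant_subspace \<pi> K"
    unfolding invariant_subspace_def
  proof
    show "subspace K" unfolding K_def using Ws
      by (auto simp: subspace_def linear_add[OF gl] linear_scale[OF gl] linear_0[OF gl])
    show "\<forall>x. \<forall>u\<in>K. \<pi> x u \<in> K"
      using gc irreducible_subrepD(3)[OF W] by (auto simp: K_def linear_0[OF pl])
  qed
  then have "K = {0} \<or> K = W" using irreducible_subrepD(5)[OF W] by (auto simp: K_def)
  moreover have "bij_betw g W U" if K0: "K = {0}"
  proof -
    have inj: "inj_on g W"
    proof (rule inj_onI)
      fix a b assume ab: "a \<in> W" "b \<in> W" "g a = g b"
      then have "a - b \<in> K" using Ws by (auto simp: K_def linear_diff[OF gl] subspace_diff)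
      then show "a = b" using K0 by simp
    qed
    have "invariant_subspace \<pi> (g ` W)"
      unfolding invariant_subspace_def
    proof
      show "subspace (g ` W)" using linear_subspace_image[OF gl Ws] .
      show "\<forall>x. \<forall>u\<in>g ` W. \<pi> x u \<in> g ` W"
        using gc irreducible_subrepD(3)[OF W] by (auto intro!: image_eqI[where x="\<pi> _ _"])
    qed
    moreover have "g ` W \<noteq> {0}"
      using K0 irreducible_subrepD(2)[OF W] by (auto simp: K_def)
    ultimately have "g ` W = U" using irreducible_subrepD(5)[OF U] gWU by blast
    then show ?thesis using inj by (simp add: bij_betw_def)
  qed
  ultimately show ?thesis by (auto simp: K_def)
qed

lemma symmetric_intertwiner_scalar:
  fixes \<pi> :: "'h \<Rightarrow> 'v::euclidean_space \<Rightarrow> 'v"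
  assumes irr: "irreducible_subrep \<pi> U" and pl: "\<And>x. linear (\<pi> x)" and T: "intertwiner \<pi> U U T"
    and sym: "\<And>u w. u \<in> U \<Longrightarrow> w \<in> U \<Longrightarrow> inner (T u) w = inner u (T w)"
  obtains c where "\<And>u. u \<in> U \<Longrightarrow> T u = c *\<^sub>R u"
proof -
  have Tl: "linear T" and TU: "\<And>u. u \<in> U \<Longrightarrow> T u \<in> U"
    and Tc: "\<And>x u. u \<in> U \<Longrightarrow> T (\<pi> x u) = \<pi> x (T u)"
    using T by (auto simp: intertwiner_def)
  obtain v c where v: "v \<in> U" "v \<noteq> 0" "T v = c *\<^sub>R v"
    using symmetric_operator_eigenvector_exists[OF irreducible_subrepD(1,2)[OF irr] Tl TU sym] .
  define E where "E = {u\<in>U. T u = c *\<^sub>R u}"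
  have "invariant_subspace \<pi> E"
    unfolding invariant_subspace_def
  proof
    show "subspace E" unfolding E_def using irreducible_subrepD(1)[OF irr]
      by (auto simp: subspace_def linear_add[OF Tl] linear_scale[OF Tl] linear_0[OF Tl] scaleR_add_right)
    show "\<forall>x. \<forall>u\<in>E. \<pi> x u \<in> E"
      using Tc irreducible_subrepD(3)[OF irr] by (auto simp: E_def linear_scale[OF pl])
  qed
  moreover have "E \<subseteq> U" "E \<noteq> {0}" using v by (auto simp: E_def)
  ultimately have "E = U" using irreducible_subrepD(5)[OF irr] by blast
  then show thesis using that unfolding E_def by blast
qed

lemma invariant_symmetric_form_scalar:
  fixes \<pi> :: "'h \<Rightarrow> 'v::euclidean_space \<Rightarrow> 'v"
  assumes irr: "irreducible_subrep \<pi> U" and pl: "\<And>x. linear (\<pi> x)" and ri: "rep_invariant_inner \<pi>"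
    and lin: "\<And>w. linear (\<lambda>u. \<beta> u w)" "\<And>u. linear (\<beta> u)"
    and sym: "\<And>u w. u \<in> U \<Longrightarrow> w \<in> U \<Longrightarrow> \<beta> u w = \<beta> w u"
    and inv: "\<And>x u w. u \<in> U \<Longrightarrow> w \<in> U \<Longrightarrow> \<beta> (\<pi> x u) w + \<beta> u (\<pi> x w) = 0"
  obtains c where "\<And>u w. u \<in> U \<Longrightarrow> w \<in> U \<Longrightarrow> \<beta> u w = c * inner u w"
proof -
  note Us = irreducible_subrepD(1)[OF irr] and Ui = irreducible_subrepD(3)[OF irr]
  obtain T where T: "linear T" "\<And>u. T u \<in> U" "\<And>u w. w \<in> U \<Longrightarrow> inner (T u) w = \<beta> u w"
    using bilinear_form_representation[OF Us lin] by blast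
  have "intertwiner \<pi> U U T"
    unfolding intertwiner_def
  proof (intro conjI allI ballI)
    fix x u assume u: "u \<in> U"
    show "T (\<pi> x u) = \<pi> x (T u)"
    proof (rule eq_if_inner_eq_on_subspace[OF Us T(2) Ui[OF T(2)]])
      fix w assume w: "w \<in> U"
      have "inner (T (\<pi> x u)) w = - \<beta> u (\<pi> x w)" using T(3) w inv[OF u w] by (simp add: eq_neg_iff_add_eq_0)
      also have "\<dots> = inner (\<pi> x (T u)) w" using T(3) Ui[OF w] rep_invariant_innerD[OF ri] by simp
      finally show "inner (T (\<pi> x u)) w = inner (\<pi> x (T u)) w" .
    qed
  qed (use T in auto)
  moreover have "inner (T u) w = inner u (T w)" if "u \<in> U" "w \<in> U" for u w
    using T(3) sym that by (simp add: inner_commute)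
  ultimately obtain c where "\<And>u. u \<in> U \<Longrightarrow> T u = c *\<^sub>R u"
    using symmetric_intertwiner_scalar[OF irr pl] by blast
  then show thesis using that T(3) by (metis inner_scaleR_left)
qed

lemma intertwiner_rescaled_isometry:
  fixes \<pi> :: "'h \<Rightarrow> 'v::euclidean_space \<Rightarrow> 'v"
  assumes irr: "irreducible_subrep \<pi> U" and pl: "\<And>x. linear (\<pi> x)" and ri: "rep_invariant_inner \<pi>"
    and g: "intertwiner \<pi> U UNIV g" and u0: "u0 \<in> U" "g u0 \<noteq> 0"
  obtains k :: real where "k \<noteq> 0" "\<And>u w. u \<in> U \<Longrightarrow> w \<in> U \<Longrightarrow> inner (k *\<^sub>R g u) (k *\<^sub>R g w) = inner u w"
proof -
  have gl: "linear g" and gc: "\<And>x u. u \<in> U \<Longrightarrow> g (\<pi> x u) = \<pi> x (g u)"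
    using g by (auto simp: intertwiner_def)
  obtain c where c: "\<And>u w. u \<in> U \<Longrightarrow> w \<in> U \<Longrightarrow> inner (g u) (g w) = c * inner u w"
  proof (rule invariant_symmetric_form_scalar[OF irr pl ri, of "\<lambda>u w. inner (g u) (g w)"])
    show "linear (\<lambda>u. inner (g u) (g w))" "linear (\<lambda>w. inner (g u) (g w))" for u w
      using gl by (auto intro!: linearI simp: linear_add linear_scale inner_add_left inner_add_right)
    show "inner (g (\<pi> x u)) (g w) + inner (g u) (g (\<pi> x w)) = 0" if "u \<in> U" "w \<in> U" for x u w
      using gc that rep_invariant_innerD[OF ri] by simp
  qed (auto simp: inner_commute)
  have "u0 \<noteq> 0" using u0(2) linear_0[OF gl] by auto
  then have "c > 0" using c[OF u0(1) u0(1)] u0(2) by (metis inner_gt_zero_iff zero_less_mult_pos2)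
  show thesis
  proof (rule that[of "1 / sqrt c"])
    show "1 / sqrt c \<noteq> 0" using \<open>c > 0\<close> by simp
    show "inner ((1 / sqrt c) *\<^sub>R g u) ((1 / sqrt c) *\<^sub>R g w) = inner u w" if "u \<in> U" "w \<in> U" for u w
      using c[OF that] \<open>c > 0\<close> by (simp add: real_sqrt_mult[symmetric])
  qed
qed

lemma intertwiner_inverse:
  fixes \<pi> :: "'h \<Rightarrow> 'v::euclidean_space \<Rightarrow> 'v"
  assumes U: "invariant_subspace \<pi> U" and f: "intertwiner \<pi> U W f" "bij_betw f U W"
  obtains g where "intertwiner \<pi> W U g" "bij_betw g W U" "\<And>u. u \<in> U \<Longrightarrow> g (f u) = u"
    "\<And>w. w \<in> W \<Longrightarrow> f (g w) = w"
proof -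
  have fl: "linear f" and fc: "\<And>x u. u \<in> U \<Longrightarrow> f (\<pi> x u) = \<pi> x (f u)"
    using f(1) by (auto simp: intertwiner_def)
  have sU: "span U = U" and Ui: "\<And>x u. u \<in> U \<Longrightarrow> \<pi> x u \<in> U"
    using U by (auto simp: invariant_subspace_def)
  have "inj_on f (span U)" using f(2) unfolding sU by (simp add: bij_betw_def)
  from linear_inj_on_left_inverse[OF fl this]
  obtain g where g: "range g \<subseteq> U" "linear g" "\<And>u. u \<in> U \<Longrightarrow> g (f u) = u"
    unfolding sU by blast
  have fW: "f ` U = W" using f(2) by (simp add: bij_betw_def)
  then have fg: "\<And>w. w \<in> W \<Longrightarrow> f (g w) = w" using g(3) by auto
  have "intertwiner \<pi> W U g"
    unfolding intertwiner_def
  proof (intro conjI allI ballI)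
    fix x w assume "w \<in> W"
    then obtain u where u: "u \<in> U" "w = f u" using fW by auto
    then show "g (\<pi> x w) = \<pi> x (g w)" using fc[OF u(1)] g(3) Ui by metis
  qed (use g in auto)
  moreover have "bij_betw g W U"
    by (rule bij_betw_byWitness[where f'=f]) (use fg g fW in auto)
  ultimately show thesis using that g(3) fg by blast
qed

lemma rep_isomorphic_refl: "rep_isomorphic \<pi> U U"
  unfolding rep_isomorphic_def intertwiner_def by (rule exI[of _ id]) (auto simp: linear_id)

lemma rep_isomorphic_sym:
  fixes \<pi> :: "'h \<Rightarrow> 'v::euclidean_space \<Rightarrow> 'v"
  assumes "invariant_subspace \<pi> U" "rep_isomorphic \<pi> U W"
  shows "rep_isomorphic \<pi> W U"
  using assms intertwiner_inverse unfolding rep_isomorphic_def by metis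

lemma rep_isomorphic_trans:
  assumes "rep_isomorphic \<pi> U W" "rep_isomorphic \<pi> W X"
  shows "rep_isomorphic \<pi> U X"
proof -
  obtain f g where f: "intertwiner \<pi> U W f" "bij_betw f U W" and g: "intertwiner \<pi> W X g" "bij_betw g W X"
    using assms unfolding rep_isomorphic_def by blast
  have "intertwiner \<pi> U X (g \<circ> f)"
    using f(1) g(1) by (fastforce simp: intertwiner_def image_subset_iff intro: linear_compose)
  moreover have "bij_betw (g \<circ> f) U X" using f(2) g(2) by (rule bij_betw_trans)
  ultimately show ?thesis unfolding rep_isomorphic_def by blast
qed

lemma real_type_if_isomorphic:
  fixes \<pi> :: "'h \<Rightarrow> 'v::euclidean_space \<Rightarrow> 'v"
  assumes U: "invariant_subspace \<pi> U" and iso: "rep_isomorphic \<pi> U W" and W: "real_type \<pi> W"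
  shows "real_type \<pi> U"
  unfolding real_type_def
proof (intro allI impI)
  fix t assume t: "intertwiner \<pi> U U t"
  obtain f where f: "intertwiner \<pi> U W f" "bij_betw f U W" using iso unfolding rep_isomorphic_def by blast
  obtain g where g: "intertwiner \<pi> W U g" "\<And>u. u \<in> U \<Longrightarrow> g (f u) = u"
    using intertwiner_inverse[OF U f] by metis
  have "intertwiner \<pi> W W (f \<circ> t \<circ> g)"
    using f(1) g(1) t by (fastforce simp: intertwiner_def image_subset_iff intro!: linear_compose)
  then obtain c where "\<forall>w\<in>W. (f \<circ> t \<circ> g) w = c *\<^sub>R w" using W unfolding real_type_def by blast
  then have c: "\<And>w. w \<in> W \<Longrightarrow> f (t (g w)) = c *\<^sub>R w" by simp
  have "t u = c *\<^sub>R u" if u: "u \<in> U" for u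
  proof -
    have "t u \<in> U" "f u \<in> W" using t f u by (auto simp: intertwiner_def)
    then have "t u = g (f (t (g (f u))))" using g(2) u by simp
    also have "\<dots> = g (c *\<^sub>R f u)" using c \<open>f u \<in> W\<close> by simp
    also have "\<dots> = c *\<^sub>R u" using g u by (simp add: intertwiner_def linear_scale)
    finally show ?thesis .
  qed
  then show "\<exists>c. \<forall>u\<in>U. t u = c *\<^sub>R u" by blast
qed

section \<open>Decompositions into irreducible summands\<close>

definition irreducible_decomposition_on ::
    "('h \<Rightarrow> 'v::euclidean_space \<Rightarrow> 'v) \<Rightarrow> 'v set \<Rightarrow> 'v set list \<Rightarrow> bool" where
  "irreducible_decomposition_on \<pi> S Us \<longleftrightarrow>
     (\<forall>U\<in>set Us. irreducible_subrep \<pi> U) \<and> span (\<Union>(set Us)) = S \<and> sum_list (map dim Us) = dim S"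

lemma irreducible_decomposition_on_UNIV:
  "irreducible_decomposition_on \<pi> UNIV Us \<longleftrightarrow> irreducible_decomposition \<pi> Us"
  by (simp add: irreducible_decomposition_on_def irreducible_decomposition_def sum_list_sum_nth
      atLeast0LessThan)

definition even_real_multiplicities :: "('h \<Rightarrow> 'v::euclidean_space \<Rightarrow> 'v) \<Rightarrow> 'v set \<Rightarrow> bool" where
  "even_real_multiplicities \<pi> S \<longleftrightarrow>
     (\<forall>W Us. irreducible_subrep \<pi> W \<and> real_type \<pi> W \<and> irreducible_decomposition_on \<pi> S Us
        \<longrightarrow> even (multiplicity_in \<pi> Us W))"

lemma multiplicity_in_conv_filter:
  "multiplicity_in \<pi> Us W = length (filter (\<lambda>U. rep_isomorphic \<pi> U W) Us)"
  by (simp add: multiplicity_in_def length_filter_conv_card)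

lemma multiplicity_in_Cons:
  "multiplicity_in \<pi> (U # Us) W = (if rep_isomorphic \<pi> U W then 1 else 0) + multiplicity_in \<pi> Us W"
  by (simp add: multiplicity_in_conv_filter)

lemma invariant_subspace_Int:
  "invariant_subspace \<pi> A \<Longrightarrow> invariant_subspace \<pi> B \<Longrightarrow> invariant_subspace \<pi> (A \<inter> B)"
  unfolding invariant_subspace_def by (auto simp: subspace_inter)

lemma invariant_subspace_sums:
  assumes "\<And>x. linear (\<pi> x)" and "invariant_subspace \<pi> U" "invariant_subspace \<pi> U'"
  shows "invariant_subspace \<pi> {a + b | a b. a \<in> U \<and> b \<in> U'}"
  unfolding invariant_subspace_def
proof (intro conjI allI ballI)
  show "subspace {a + b | a b. a \<in> U \<and> b \<in> U'}"
    using assms by (intro subspace_sums) (auto simp: invariant_subspace_def)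
  fix x v assume "v \<in> {a + b | a b. a \<in> U \<and> b \<in> U'}"
  then obtain a b where "a \<in> U" "b \<in> U'" "v = a + b" by blast
  then have "\<pi> x v = \<pi> x a + \<pi> x b" "\<pi> x a \<in> U" "\<pi> x b \<in> U'"
    using assms by (auto simp: invariant_subspace_def linear_add)
  then show "\<pi> x v \<in> {a + b | a b. a \<in> U \<and> b \<in> U'}" by blast
qed

lemma invariant_subspace_orthogonal_comp:
  assumes "rep_invariant_inner \<pi>" "invariant_subspace \<pi> U"
  shows "invariant_subspace \<pi> (U\<^sup>\<bottom>)"
  using assms rep_invariant_innerD[OF assms(1)]
  by (auto simp: invariant_subspace_def subspace_orthogonal_comp orthogonal_comp_iff)

lemma irreducible_subrep_exists:
  fixes \<pi> :: "'h \<Rightarrow> 'v::euclidean_space \<Rightarrow> 'v"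
  assumes "invariant_subspace \<pi> S" "S \<noteq> {0}"
  obtains U where "irreducible_subrep \<pi> U" "U \<subseteq> S"
proof -
  define M where "M = {U. invariant_subspace \<pi> U \<and> U \<subseteq> S \<and> U \<noteq> {0}}"
  have "S \<in> M" using assms by (simp add: M_def)
  then obtain U where U: "U \<in> M" "\<And>U'. U' \<in> M \<Longrightarrow> dim U \<le> dim U'"
    using ex_has_least_nat[of "\<lambda>U. U \<in> M" S dim] by blast
  have "irreducible_subrep \<pi> U"
    unfolding irreducible_subrep_def
  proof (intro conjI allI impI)
    show "invariant_subspace \<pi> U" "U \<noteq> {0}" using U(1) by (auto simp: M_def)
    fix U' assume U': "invariant_subspace \<pi> U' \<and> U' \<subseteq> U"
    show "U' = {0} \<or> U' = U"
    proof (cases "U' = {0}")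
      case False
      then have "U' \<in> M" using U' U(1) by (auto simp: M_def)
      then have "dim U \<le> dim U'" using U(2) by blast
      moreover have "subspace U'" "subspace U" using U' U(1) by (auto simp: M_def invariant_subspace_def)
      ultimately have "U' = U" using subspace_dim_equal[of U' U] U' by simp
      then show ?thesis by simp
    qed simp
  qed
  then show thesis using that U(1) by (auto simp: M_def)
qed

lemma irreducible_decomposition_on_Cons:
  fixes \<pi> :: "'h \<Rightarrow> 'v::euclidean_space \<Rightarrow> 'v"
  assumes S: "subspace S" and U: "irreducible_subrep \<pi> U" "U \<subseteq> S"
    and Us: "irreducible_decomposition_on \<pi> (S \<inter> U\<^sup>\<bottom>) Us"
  shows "irreducible_decomposition_on \<pi> S (U # Us)"
proof -
  have sU: "subspace U" using irreducible_subrepD(1)[OF U(1)] .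
  have "span (\<Union>(set (U # Us))) = {x + y | x y. x \<in> span U \<and> y \<in> span (\<Union>(set Us))}"
    by (simp add: span_Un)
  also have "\<dots> = S"
    using Us sums_orthogonal_comp_Int[OF sU S U(2)] sU
    by (simp add: irreducible_decomposition_on_def span_eq_iff[THEN iffD2, OF sU])
  finally show ?thesis
    using Us U(1) dim_orthogonal_comp_Int[OF sU S U(2)] by (simp add: irreducible_decomposition_on_def)
qed

lemma irreducible_decomposition_exists:
  fixes \<pi> :: "'h \<Rightarrow> 'v::euclidean_space \<Rightarrow> 'v"
  assumes ri: "rep_invariant_inner \<pi>" and S: "invariant_subspace \<pi> S"
  obtains Us where "irreducible_decomposition_on \<pi> S Us"
  using S
proof (induction "dim S" arbitrary: S thesis rule: less_induct)
  case less
  show ?case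
  proof (cases "S = {0}")
    case True
    then show ?thesis using less.prems(1)[of "[]"] by (simp add: irreducible_decomposition_on_def)
  next
    case False
    obtain U where U: "irreducible_subrep \<pi> U" "U \<subseteq> S"
      using irreducible_subrep_exists[OF less.prems(2) False] .
    have sS: "subspace S" using less.prems(2) by (simp add: invariant_subspace_def)
    have sU: "subspace U" and "U \<noteq> {0}" using irreducible_subrepD[OF U(1)] by auto
    then have "dim U > 0" using dim_eq_0 subspace_0 by fastforce
    then have "dim (S \<inter> U\<^sup>\<bottom>) < dim S" using dim_orthogonal_comp_Int[OF sU sS U(2)] by simp
    moreover have "invariant_subspace \<pi> (S \<inter> U\<^sup>\<bottom>)"
      using invariant_subspace_Int[OF less.prems(2) invariant_subspace_orthogonal_comp[OF ri]]
        irreducible_subrepD(4)[OF U(1)] by blast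
    ultimately obtain Us where "irreducible_decomposition_on \<pi> (S \<inter> U\<^sup>\<bottom>) Us"
      using less.hyps by blast
    then show ?thesis using less.prems(1) irreducible_decomposition_on_Cons[OF sS U] by blast
  qed
qed

lemma direct_sum_basis:
  fixes Us :: "'a::euclidean_space set list"
  assumes span: "span (\<Union>(set Us)) = UNIV" and dim: "sum_list (map dim Us) = DIM('a)"
    and B: "\<And>i. B i \<subseteq> Us!i" "\<And>i. independent (B i)" "\<And>i. Us!i \<subseteq> span (B i)"
      "\<And>i. card (B i) = dim (Us!i)"
  shows "independent (\<Union>i<length Us. B i)" "span (\<Union>i<length Us. B i) = UNIV"
    "\<And>i j. i < length Us \<Longrightarrow> j < length Us \<Longrightarrow> i \<noteq> j \<Longrightarrow> B i \<inter> B j = {}"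
proof -
  define n where "n = length Us"
  define T where "T = Sigma {..<n} B"
  define BB where "BB = (\<Union>i<n. B i)"
  have finB: "finite (B i)" for i using B(2) by (rule finiteI_independent)
  then have finT: "finite T" and finBB: "finite BB" by (simp_all add: T_def BB_def)
  have cardT: "card T = DIM('a)"
    using finB B(4) dim by (simp add: T_def n_def sum_list_sum_nth atLeast0LessThan)
  have BBT: "BB = snd ` T" unfolding BB_def T_def by force
  have "\<Union>(set Us) \<subseteq> span BB"
  proof
    fix u assume "u \<in> \<Union>(set Us)"
    then obtain i where i: "i < n" "u \<in> Us!i" by (auto simp: n_def in_set_conv_nth)
    have "span (B i) \<subseteq> span BB" using i(1) by (intro span_mono) (auto simp: BB_def)
    then show "u \<in> span BB" using B(3) i by blast
  qed
  then have spBB: "UNIV \<subseteq> span BB" using span by (metis span_minimal subspace_span)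
  then show "span (\<Union>i<length Us. B i) = UNIV" by (auto simp: BB_def n_def)
  have "DIM('a) \<le> card BB" using dim_le_card[OF spBB finBB] by simp
  moreover have "card BB \<le> card T" unfolding BBT using finT by (rule card_image_le)
  ultimately have "card BB = DIM('a)" using cardT by linarith
  then show "independent (\<Union>i<length Us. B i)"
    using card_le_dim_spanning[OF subset_UNIV spBB finBB] by (simp add: BB_def n_def)
  have "card (snd ` T) = card T" using \<open>card BB = DIM('a)\<close> cardT BBT by simp
  have injT: "inj_on snd T" using \<open>card (snd ` T) = card T\<close> finT by (simp add: eq_card_imp_inj_on)
  show "B i \<inter> B j = {}" if "i < length Us" "j < length Us" "i \<noteq> j" for i j
    using that inj_onD[OF injT] by (fastforce simp: T_def n_def)
qed

lemma direct_sum_projections: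
  fixes Us :: "'a::euclidean_space set list"
  assumes span: "span (\<Union>(set Us)) = UNIV" and dim: "sum_list (map dim Us) = DIM('a)"
    and sub: "\<And>i. i < length Us \<Longrightarrow> subspace (Us!i)"
  obtains P where "\<And>i. linear (P i)" "\<And>i v. i < length Us \<Longrightarrow> P i v \<in> Us!i"
    "\<And>i j u. i < length Us \<Longrightarrow> j < length Us \<Longrightarrow> u \<in> Us!j \<Longrightarrow> P i u = (if i = j then u else 0)"
    "\<And>v. (\<Sum>i<length Us. P i v) = v"
proof -
  define n where "n = length Us"
  have "\<forall>i. \<exists>B. B \<subseteq> Us!i \<and> independent B \<and> Us!i \<subseteq> span B \<and> card B = dim (Us!i)"
    by (meson basis_exists)
  then obtain B where B: "\<And>i. B i \<subseteq> Us!i" "\<And>i. independent (B i)" "\<And>i. Us!i \<subseteq> span (B i)"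
    "\<And>i. card (B i) = dim (Us!i)"
    by metis
  define BB where "BB = (\<Union>i<n. B i)"
  have indep: "independent BB" and spBB: "\<And>v. v \<in> span BB"
    and disj: "\<And>i j. i < n \<Longrightarrow> j < n \<Longrightarrow> i \<noteq> j \<Longrightarrow> B i \<inter> B j = {}"
    using direct_sum_basis[OF span dim B] by (simp_all add: BB_def n_def)
  have "\<forall>i. \<exists>g. linear g \<and> (\<forall>b\<in>BB. g b = (if b \<in> B i then b else 0))"
    by (intro allI linear_independent_extend[OF indep])
  from choice[OF this] obtain P
    where P: "\<And>i. linear (P i)" "\<And>i b. b \<in> BB \<Longrightarrow> P i b = (if b \<in> B i then b else 0)"
    by blast
  have Pu: "P i u = (if i = j then u else 0)" if "i < n" "j < n" "u \<in> Us!j" for i j u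
  proof (rule linear_eq_on[of "P i" "\<lambda>u. if i = j then u else 0", OF P(1) _ that(3)[THEN subsetD[OF B(3)]]])
    show "linear (\<lambda>u. if i = j then u else 0)" by (rule linearI) auto
    fix b assume "b \<in> B j"
    moreover from this have "b \<in> BB" using that(2) by (auto simp: BB_def)
    ultimately show "P i b = (if i = j then b else 0)"
      using P(2)[of b i] disj[OF that(1,2)] by (auto simp: disjoint_iff)
  qed
  have "P i v \<in> Us!i" if "i < n" for i v
  proof -
    have "subspace (P i -` (Us!i))" using linear_subspace_vimage[OF P(1) sub[OF that[unfolded n_def]]] .
    moreover have "BB \<subseteq> P i -` (Us!i)" using P(2) B(1) subspace_0[OF sub[OF that[unfolded n_def]]] by fastforce
    ultimately show ?thesis using spBB span_minimal by blast
  qed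
  moreover have "(\<Sum>i<n. P i v) = v" for v
  proof (rule linear_eq_on[OF linear_compose_sum linear_id, unfolded id_def, OF _ spBB])
    show "\<forall>i\<in>{..<n}. linear (P i)" using P(1) by blast
    fix b assume "b \<in> BB"
    then obtain j where j: "j < n" "b \<in> B j" by (auto simp: BB_def)
    then have "b \<in> Us!j" using B(1) by blast
    then have "(\<Sum>i<n. P i b) = (\<Sum>i<n. if i = j then b else 0)" using Pu j(1) by (intro sum.cong) auto
    then show "(\<Sum>i<n. P i b) = b" using j(1) by simp
  qed
  ultimately show thesis using P(1) Pu by (intro that) (auto simp: n_def)
qed

lemma direct_sum_projection_commute:
  assumes A: "linear A" "\<And>j u. j < n \<Longrightarrow> u \<in> Us!j \<Longrightarrow> A u \<in> Us!j"
    and P: "\<And>j. linear (P j)" "\<And>j v. j < n \<Longrightarrow> P j v \<in> Us!j"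
      "\<And>j u. j < n \<Longrightarrow> u \<in> Us!j \<Longrightarrow> P i u = (if i = j then u else 0)" "\<And>v. (\<Sum>j<n. P j v) = v"
    and i: "i < n"
  shows "P i (A v) = A (P i v)"
proof -
  have "P i (A v) = P i (A (\<Sum>j<n. P j v))" using P(4) by simp
  also have "\<dots> = (\<Sum>j<n. P i (A (P j v)))" by (simp add: linear_sum[OF A(1)] linear_sum[OF P(1)])
  also have "\<dots> = (\<Sum>j<n. if i = j then A (P i v) else 0)"
    using A(2) P(2,3) by (intro sum.cong) auto
  also have "\<dots> = A (P i v)" using i by simp
  finally show ?thesis .
qed

section \<open>Orthogonal complex structures\<close>

text \<open>A complex structure on \<open>S\<close> is extended by zero on \<open>S\<^sup>\<bottom>\<close>, so that structures on mutually
  orthogonal subspaces can simply be added.\<close>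
definition orthogonal_complex_structure :: "'a::real_inner set \<Rightarrow> ('a \<Rightarrow> 'a) \<Rightarrow> bool" where
  "orthogonal_complex_structure S J \<longleftrightarrow> linear J \<and> (\<forall>v\<in>S. J v \<in> S) \<and> (\<forall>v\<in>S. J (J v) = - v) \<and>
     (\<forall>v\<in>S. \<forall>w\<in>S. inner (J v) (J w) = inner v w) \<and> (\<forall>v\<in>S\<^sup>\<bottom>. J v = 0)"

lemma orthogonal_complex_structure_zero: "orthogonal_complex_structure {0} (\<lambda>_. 0)"
  by (simp add: orthogonal_complex_structure_def linear_zero)

lemma orthogonal_complex_structure_extend:
  fixes K :: "'a::euclidean_space \<Rightarrow> 'a"
  assumes A: "subspace A" and K: "linear K" "\<And>v. v \<in> A \<Longrightarrow> K v \<in> A" "\<And>v. v \<in> A \<Longrightarrow> K (K v) = - v"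
    "\<And>v w. v \<in> A \<Longrightarrow> w \<in> A \<Longrightarrow> inner (K v) (K w) = inner v w"
  obtains J where "orthogonal_complex_structure A J" "\<And>v. v \<in> A \<Longrightarrow> J v = K v"
proof -
  obtain P where P: "orthogonal_projection A P" using orthogonal_projection_exists[OF A] .
  have PA: "P v = v" if "v \<in> A" for v using orthogonal_projection_id[OF P A that] .
  have "orthogonal_complex_structure A (K \<circ> P)"
    unfolding orthogonal_complex_structure_def
  proof (intro conjI ballI)
    show "linear (K \<circ> P)" using P K(1) by (simp add: orthogonal_projection_def linear_compose)
    show "(K \<circ> P) v = 0" if "v \<in> A\<^sup>\<bottom>" for v
      using orthogonal_projection_zero[OF P that] linear_0[OF K(1)] by simp
  qed (use K PA in auto)
  then show thesis using that PA by simp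
qed

lemma orthogonal_complex_structure_add:
  assumes JA: "orthogonal_complex_structure A JA" and JB: "orthogonal_complex_structure B JB"
    and "b \<in> A\<^sup>\<bottom>" "a \<in> B\<^sup>\<bottom>"
  shows "JA (a + b) + JB (a + b) = JA a + JB b"
proof -
  have "JA b = 0" "JB a = 0" using JA JB assms by (auto simp: orthogonal_complex_structure_def)
  moreover have "linear JA" "linear JB" using JA JB by (auto simp: orthogonal_complex_structure_def)
  ultimately show ?thesis by (simp add: linear_add)
qed

lemma orthogonal_complex_structure_sum:
  fixes A B :: "'a::real_inner set"
  assumes A: "subspace A" and B: "subspace B" and AB: "\<And>a b. a \<in> A \<Longrightarrow> b \<in> B \<Longrightarrow> inner a b = 0"
    and JA: "orthogonal_complex_structure A JA" and JB: "orthogonal_complex_structure B JB"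
  shows "orthogonal_complex_structure {a + b | a b. a \<in> A \<and> b \<in> B} (\<lambda>v. JA v + JB v)"
proof -
  have lA: "linear JA" and JAA: "\<And>a. a \<in> A \<Longrightarrow> JA a \<in> A" and JA2: "\<And>a. a \<in> A \<Longrightarrow> JA (JA a) = - a"
    and JAi: "\<And>a a'. a \<in> A \<Longrightarrow> a' \<in> A \<Longrightarrow> inner (JA a) (JA a') = inner a a'"
    and JAo: "\<And>v. v \<in> A\<^sup>\<bottom> \<Longrightarrow> JA v = 0"
    using JA by (auto simp: orthogonal_complex_structure_def)
  have lB: "linear JB" and JBB: "\<And>b. b \<in> B \<Longrightarrow> JB b \<in> B" and JB2: "\<And>b. b \<in> B \<Longrightarrow> JB (JB b) = - b"
    and JBi: "\<And>b b'. b \<in> B \<Longrightarrow> b' \<in> B \<Longrightarrow> inner (JB b) (JB b') = inner b b'"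
    and JBo: "\<And>v. v \<in> B\<^sup>\<bottom> \<Longrightarrow> JB v = 0"
    using JB by (auto simp: orthogonal_complex_structure_def)
  have BA: "\<And>a b. a \<in> A \<Longrightarrow> b \<in> B \<Longrightarrow> inner b a = 0" using AB by (simp add: inner_commute)
  have J: "JA (a + b) + JB (a + b) = JA a + JB b" if "a \<in> A" "b \<in> B" for a b
    using that AB BA by (intro orthogonal_complex_structure_add[OF JA JB]) (auto simp: orthogonal_comp_iff)
  let ?S = "{a + b | a b. a \<in> A \<and> b \<in> B}"
  show ?thesis
    unfolding orthogonal_complex_structure_def
  proof (intro conjI ballI)
    show "linear (\<lambda>v. JA v + JB v)" using lA lB by (rule linear_compose_add)
  next
    fix v assume "v \<in> ?S"
    then obtain a b where ab: "a \<in> A" "b \<in> B" "v = a + b" by blast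
    show "JA v + JB v \<in> ?S" using J[OF ab(1,2)] JAA JBB ab by blast
    show "JA (JA v + JB v) + JB (JA v + JB v) = - v"
      using J[OF JAA JBB] J[OF ab(1,2)] JA2 JB2 ab by simp
  next
    fix v w assume "v \<in> ?S" "w \<in> ?S"
    then obtain a b a' b' where ab: "a \<in> A" "b \<in> B" "v = a + b" "a' \<in> A" "b' \<in> B" "w = a' + b'"
      by blast
    have "inner (JA v + JB v) (JA w + JB w) = inner (JA a + JB b) (JA a' + JB b')"
      using J ab by simp
    also have "\<dots> = inner (JA a) (JA a') + inner (JB b) (JB b')"
      using AB BA JAA JBB ab by (simp add: inner_add_left inner_add_right)
    also have "\<dots> = inner v w" using AB BA JAi JBi ab by (simp add: inner_add_left inner_add_right)
    finally show "inner (JA v + JB v) (JA w + JB w) = inner v w" .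
  next
    fix v assume "v \<in> ?S\<^sup>\<bottom>"
    moreover have "A \<subseteq> ?S" "B \<subseteq> ?S" using subspace_0[OF A] subspace_0[OF B] by force+
    ultimately have "v \<in> A\<^sup>\<bottom>" "v \<in> B\<^sup>\<bottom>" using orthogonal_comp_anti_mono by blast+
    then show "JA v + JB v = 0" using JAo JBo by simp
  qed
qed

lemma intertwiner_orthogonal_complex_structure_sum:
  assumes pl: "\<And>x. linear (\<pi> x)" and AB: "\<And>a b. a \<in> A \<Longrightarrow> b \<in> B \<Longrightarrow> inner a b = 0"
    and A: "\<And>x a. a \<in> A \<Longrightarrow> \<pi> x a \<in> A" and B: "\<And>x b. b \<in> B \<Longrightarrow> \<pi> x b \<in> B"
    and JA: "orthogonal_complex_structure A JA" "intertwiner \<pi> A A JA"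
    and JB: "orthogonal_complex_structure B JB" "intertwiner \<pi> B B JB"
  shows "intertwiner \<pi> {a + b | a b. a \<in> A \<and> b \<in> B} {a + b | a b. a \<in> A \<and> b \<in> B} (\<lambda>v. JA v + JB v)"
proof -
  have lA: "linear JA" and lB: "linear JB" using JA(2) JB(2) by (auto simp: intertwiner_def)
  have J: "JA (a + b) + JB (a + b) = JA a + JB b" if "a \<in> A" "b \<in> B" for a b
    using that AB AB[THEN inner_commute[THEN trans]]
    by (intro orthogonal_complex_structure_add[OF JA(1) JB(1)]) (auto simp: orthogonal_comp_iff)
  show ?thesis
    unfolding intertwiner_def
  proof (intro conjI allI ballI subsetI)
    show "linear (\<lambda>v. JA v + JB v)" using lA lB by (rule linear_compose_add)
  next
    fix v assume "v \<in> (\<lambda>v. JA v + JB v) ` {a + b | a b. a \<in> A \<and> b \<in> B}"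
    then show "v \<in> {a + b | a b. a \<in> A \<and> b \<in> B}"
      using J JA(2) JB(2) by (fastforce simp: intertwiner_def)
  next
    fix x v assume "v \<in> {a + b | a b. a \<in> A \<and> b \<in> B}"
    then obtain a b where ab: "a \<in> A" "b \<in> B" "v = a + b" by blast
    have "JA (\<pi> x v) + JB (\<pi> x v) = JA (\<pi> x a) + JB (\<pi> x b)"
      using J[OF A B] ab linear_add[OF pl] by simp
    also have "\<dots> = \<pi> x (JA v + JB v)"
      using J ab JA(2) JB(2) linear_add[OF pl] by (simp add: intertwiner_def)
    finally show "JA (\<pi> x v) + JB (\<pi> x v) = \<pi> x (JA v + JB v)" .
  qed
qed

lemma intertwiner_cong:
  assumes "intertwiner \<pi> A B K" "invariant_subspace \<pi> A" "linear J" "\<And>v. v \<in> A \<Longrightarrow> J v = K v"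
  shows "intertwiner \<pi> A B J"
  using assms by (auto simp: intertwiner_def invariant_subspace_def)

lemma dim_span_orthogonal_pair:
  fixes e f :: "'a::euclidean_space"
  assumes "e \<noteq> 0" "f \<noteq> 0" "inner e f = 0"
  shows "dim (span {e, f}) = 2"
proof -
  have "independent {e, f}"
    by (rule pairwise_orthogonal_independent)
      (use assms in \<open>auto simp: pairwise_def orthogonal_def inner_commute\<close>)
  moreover have "e \<noteq> f" using assms by auto
  ultimately show ?thesis using dim_span_eq_card_independent by fastforce
qed

lemma orthogonal_comp_span_pairI:
  fixes e f v :: "'a::euclidean_space"
  assumes "inner v e = 0" "inner v f = 0"
  shows "v \<in> (span {e, f})\<^sup>\<bottom>"
proof -
  have "orthogonal v a" if "a \<in> span {e, f}" for a
    using orthogonal_to_span[OF that] assms by (auto simp: orthogonal_def)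
  then show ?thesis by (auto simp: orthogonal_comp_iff orthogonal_def)
qed

lemma even_dim_if_complex_structure:
  fixes J :: "'a::euclidean_space \<Rightarrow> 'a"
  assumes J: "linear J"
  shows "subspace E \<Longrightarrow> \<forall>v\<in>E. J v \<in> E \<Longrightarrow> \<forall>v\<in>E. J (J v) = - v \<Longrightarrow>
    \<forall>v\<in>E. \<forall>w\<in>E. inner (J v) (J w) = inner v w \<Longrightarrow> even (dim E)"
proof (induction "dim E" arbitrary: E rule: less_induct)
  case less
  show ?case
  proof (cases "E = {0}")
    case True then show ?thesis by simp
  next
    case False
    then obtain e where e: "e \<in> E" "e \<noteq> 0" using less.prems(1) subspace_0 by blast
    have Je: "J e \<in> E" "J (J e) = - e" using less.prems(2,3) e by auto
    have "inner (J e) (J (J e)) = inner e (J e)" using less.prems(4) e Je by blast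
    then have eJe: "inner e (J e) = 0" using Je by (simp add: inner_commute)
    have "J e \<noteq> 0" using e Je linear_0[OF J] by auto
    define A where "A = span {e, J e}"
    have dA: "dim A = 2" unfolding A_def using dim_span_orthogonal_pair e(2) \<open>J e \<noteq> 0\<close> eJe by blast
    have AE: "A \<subseteq> E" unfolding A_def using e Je less.prems(1) by (simp add: span_minimal)
    define E' where "E' = E \<inter> A\<^sup>\<bottom>"
    have sE': "subspace E'"
      unfolding E'_def using less.prems(1) subspace_orthogonal_comp by (rule subspace_inter)
    have dimE: "dim A + dim E' = dim E"
      unfolding E'_def using dim_orthogonal_comp_Int[OF _ less.prems(1) AE] by (simp add: A_def)
    \<comment> \<open>\<open>A\<close> is \<open>J\<close>-invariant and \<open>J\<close> is orthogonal, so \<open>J\<close> also preserves \<open>E'\<close>.\<close>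
    have "\<forall>v\<in>E'. J v \<in> E'"
    proof
      fix v assume v: "v \<in> E'"
      have "e \<in> A" "J e \<in> A" unfolding A_def by (auto intro: span_base)
      then have vE: "v \<in> E" and v0: "inner v e = 0" "inner v (J e) = 0"
        using v by (auto simp: E'_def orthogonal_comp_iff)
      have "inner (J v) e = - inner (J v) (J (J e))" using Je by simp
      also have "\<dots> = - inner v (J e)" using less.prems(4) vE Je(1) by simp
      finally have "inner (J v) e = 0" using v0 by simp
      moreover have "inner (J v) (J e) = 0" using less.prems(4) vE e v0 by simp
      ultimately show "J v \<in> E'"
        using less.prems(2) vE orthogonal_comp_span_pairI by (simp add: E'_def A_def)
    qed
    then have "even (dim E')" using less.hyps[of E'] dimE dA sE' less.prems(3,4) by (simp add: E'_def)
    then show ?thesis using dimE dA by presburger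
  qed
qed

lemma orthogonal_complex_structure_span_pair:
  fixes e1 e2 :: "'a::euclidean_space"
  assumes n: "norm e1 = 1" "norm e2 = 1" "inner e1 e2 = 0"
  shows "orthogonal_complex_structure (span {e1, e2}) (\<lambda>v. inner v e1 *\<^sub>R e2 - inner v e2 *\<^sub>R e1)"
proof -
  define A where "A = span {e1, e2}"
  define K where "K = (\<lambda>v. inner v e1 *\<^sub>R e2 - inner v e2 *\<^sub>R e1)"
  have eA: "e1 \<in> A" "e2 \<in> A" by (auto simp: A_def intro: span_base)
  have i: "inner e1 e1 = 1" "inner e2 e2 = 1" "inner e2 e1 = 0"
    using n by (auto simp: dot_square_norm inner_commute)
  have exp: "v = inner v e1 *\<^sub>R e1 + inner v e2 *\<^sub>R e2" if "v \<in> A" for v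
  proof -
    define d where "d = v - (inner v e1 *\<^sub>R e1 + inner v e2 *\<^sub>R e2)"
    have "d \<in> A" using that eA by (simp add: A_def d_def subspace_diff subspace_add subspace_mul)
    moreover have "d \<in> A\<^sup>\<bottom>"
      unfolding A_def by (rule orthogonal_comp_span_pairI) (simp_all add: d_def inner_diff_left inner_add_left i n(3))
    ultimately have "d = 0" using orthogonal_Int_0[of A] by (auto simp: A_def)
    then show ?thesis by (simp add: d_def)
  qed
  have "orthogonal_complex_structure A K"
    unfolding orthogonal_complex_structure_def
  proof (intro conjI ballI)
    show "linear K" unfolding K_def by (rule linearI) (simp_all add: inner_add_left algebra_simps)
    show "K v \<in> A" for v using eA by (simp add: K_def A_def subspace_diff subspace_mul)
    show "K (K v) = - v" if "v \<in> A" for v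
      using exp[OF that] by (simp add: K_def inner_diff_left i n(3) algebra_simps)
    show "inner (K v) (K w) = inner v w" if "v \<in> A" "w \<in> A" for v w
    proof -
      have "inner (K v) (K w) = inner v e1 * inner w e1 + inner v e2 * inner w e2"
        by (simp add: K_def inner_diff_left inner_diff_right i n(3))
      also have "\<dots> = inner v w" by (subst (3) exp[OF that(2)]) (simp add: inner_add_right)
      finally show ?thesis .
    qed
    show "K v = 0" if "v \<in> A\<^sup>\<bottom>" for v using that eA by (simp add: K_def orthogonal_comp_iff inner_commute)
  qed
  then show ?thesis by (simp add: A_def K_def)
qed

lemma orthonormal_pair_exists:
  fixes C :: "'a::euclidean_space set"
  assumes "subspace C" "dim C \<ge> 2"
  obtains e1 e2 where "e1 \<in> C" "e2 \<in> C" "norm e1 = 1" "norm e2 = 1" "inner e1 e2 = 0"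
proof -
  obtain B where B: "B \<subseteq> C" "pairwise orthogonal B" "\<And>x. x \<in> B \<Longrightarrow> norm x = 1" "card B = dim C"
    using orthonormal_basis_subspace[OF assms(1)] by metis
  have "B \<noteq> {}"
  proof
    assume "B = {}"
    then have "dim C = 0" using B(4) by simp
    then show False using assms(2) by linarith
  qed
  then obtain e1 where e1: "e1 \<in> B" by blast
  then have "card (B - {e1}) \<noteq> 0" using B(4) assms(2) by (simp add: card_Diff_singleton)
  then have "B - {e1} \<noteq> {}" by (metis card.empty)
  then obtain e2 where e2: "e2 \<in> B" "e2 \<noteq> e1" by blast
  show thesis
  proof (rule that)
    show "inner e1 e2 = 0" using B(2) e1 e2 by (auto simp: pairwise_def orthogonal_def)
  qed (use B e1 e2 in auto)
qed

lemma orthogonal_complex_structure_exists: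
  fixes C :: "'a::euclidean_space set"
  shows "subspace C \<Longrightarrow> even (dim C) \<Longrightarrow> \<exists>J. orthogonal_complex_structure C J"
proof (induction "dim C" arbitrary: C rule: less_induct)
  case less
  show ?case
  proof (cases "C = {0}")
    case True then show ?thesis using orthogonal_complex_structure_zero by blast
  next
    case False
    then have "dim C \<noteq> 0" using less.prems(1) dim_eq_0 subspace_0 by blast
    then have "dim C \<ge> 2" using less.prems(2) by presburger
    then obtain e1 e2 where e: "e1 \<in> C" "e2 \<in> C" "norm e1 = 1" "norm e2 = 1" "inner e1 e2 = 0"
      using orthonormal_pair_exists[OF less.prems(1)] by blast
    define A where "A = span {e1, e2}"
    have AC: "A \<subseteq> C" unfolding A_def using e less.prems(1) by (simp add: span_minimal)
    define C' where "C' = C \<inter> A\<^sup>\<bottom>"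
    have C's: "subspace C'"
      unfolding C'_def using less.prems(1) subspace_orthogonal_comp by (rule subspace_inter)
    have "dim A + dim C' = dim C"
      unfolding C'_def using dim_orthogonal_comp_Int[OF _ less.prems(1) AC] by (simp add: A_def)
    moreover have "dim A = 2" unfolding A_def using e by (intro dim_span_orthogonal_pair) auto
    ultimately have "dim C' < dim C" "even (dim C')" using less.prems(2) by presburger+
    then obtain J' where J': "orthogonal_complex_structure C' J'" using less.hyps C's by blast
    define K where "K = (\<lambda>v. inner v e1 *\<^sub>R e2 - inner v e2 *\<^sub>R e1)"
    have "orthogonal_complex_structure A K"
      using orthogonal_complex_structure_span_pair[OF e(3-5)] by (simp add: A_def K_def)
    then have "orthogonal_complex_structure {a + b | a b. a \<in> A \<and> b \<in> C'} (\<lambda>v. K v + J' v)"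
      by (intro orthogonal_complex_structure_sum C's J')
        (auto simp: A_def C'_def orthogonal_comp_iff inner_commute)
    moreover have "{a + b | a b. a \<in> A \<and> b \<in> C'} = C"
      unfolding C'_def using sums_orthogonal_comp_Int[OF _ less.prems(1) AC] by (simp add: A_def)
    ultimately show ?thesis by auto
  qed
qed

section \<open>Equivariant complex structures and real-type multiplicities\<close>

lemma skew_isometry_square:
  fixes K :: "'a::real_inner \<Rightarrow> 'a"
  assumes U: "subspace U" and K: "\<And>u. u \<in> U \<Longrightarrow> K u \<in> U"
    and skew: "\<And>u w. u \<in> U \<Longrightarrow> w \<in> U \<Longrightarrow> inner (K u) w = - inner u (K w)"
    and isom: "\<And>u w. u \<in> U \<Longrightarrow> w \<in> U \<Longrightarrow> inner (K u) (K w) = inner u w"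
    and v: "v \<in> U"
  shows "K (K v) = - v"
proof (rule eq_if_inner_eq_on_subspace[OF U K[OF K[OF v]]])
  show "- v \<in> U" using U v by (simp add: subspace_neg)
  fix w assume "w \<in> U"
  then show "inner (K (K v)) w = inner (- v) w" using skew K isom v by simp
qed

lemma skew_intertwiner_exists:
  fixes \<pi> :: "'h \<Rightarrow> 'v::euclidean_space \<Rightarrow> 'v"
  assumes ri: "rep_invariant_inner \<pi>" and pl: "\<And>x. linear (\<pi> x)"
    and irr: "irreducible_subrep \<pi> U" and nr: "\<not> real_type \<pi> U"
  obtains g u0 where "intertwiner \<pi> U U g" "\<And>u w. u \<in> U \<Longrightarrow> w \<in> U \<Longrightarrow> inner (g u) w = - inner u (g w)"
    "u0 \<in> U" "g u0 \<noteq> 0"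
proof -
  note Us = irreducible_subrepD(1)[OF irr]
  obtain f where f: "intertwiner \<pi> U U f" and nf: "\<not> (\<exists>c::real. \<forall>u\<in>U. f u = c *\<^sub>R u)"
    using nr unfolding real_type_def by blast
  have fl: "linear f" and fU: "\<And>u. u \<in> U \<Longrightarrow> f u \<in> U"
    and fc: "\<And>x u. u \<in> U \<Longrightarrow> f (\<pi> x u) = \<pi> x (f u)"
    using f by (auto simp: intertwiner_def)
  \<comment> \<open>The symmetric part of \<open>f\<close> is a scalar, so its skew part is a nonzero intertwiner.\<close>
  obtain c where c: "\<And>u w. u \<in> U \<Longrightarrow> w \<in> U \<Longrightarrow> inner (f u) w + inner u (f w) = c * inner u w"
  proof (rule invariant_symmetric_form_scalar[OF irr pl ri, of "\<lambda>u w. inner (f u) w + inner u (f w)"])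
    show "linear (\<lambda>u. inner (f u) w + inner u (f w))" "linear (\<lambda>w. inner (f u) w + inner u (f w))"
      for u w using fl by (auto intro!: linearI simp: linear_add linear_scale inner_add_left
          inner_add_right algebra_simps)
    show "inner (f (\<pi> x u)) w + inner (\<pi> x u) (f w) + (inner (f u) (\<pi> x w) + inner u (f (\<pi> x w))) = 0"
      if "u \<in> U" "w \<in> U" for x u w
      using fc that rep_invariant_innerD[OF ri] by simp
  qed (auto simp: inner_commute)
  define g where "g u = f u - (c / 2) *\<^sub>R u" for u
  have "linear g" unfolding g_def
    by (rule linearI) (simp_all add: linear_add[OF fl] linear_scale[OF fl] algebra_simps)
  then have g: "intertwiner \<pi> U U g"
    using fU fc Us by (auto simp: intertwiner_def g_def subspace_diff subspace_mul linear_diff[OF pl]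
        linear_scale[OF pl])
  have gskew: "inner (g u) w = - inner u (g w)" if "u \<in> U" "w \<in> U" for u w
    using c[OF that] by (simp add: g_def inner_diff_left inner_diff_right algebra_simps)
  obtain u0 where u0: "u0 \<in> U" "g u0 \<noteq> 0"
    using nf by (fastforce simp: g_def)
  with g gskew show thesis by (rule that)
qed

lemma equivariant_complex_structure_not_real_type:
  fixes \<pi> :: "'h \<Rightarrow> 'v::euclidean_space \<Rightarrow> 'v"
  assumes ri: "rep_invariant_inner \<pi>" and pl: "\<And>x. linear (\<pi> x)"
    and irr: "irreducible_subrep \<pi> U" and nr: "\<not> real_type \<pi> U"
  obtains J where "orthogonal_complex_structure U J" "intertwiner \<pi> U U J"
proof -
  note Us = irreducible_subrepD(1)[OF irr]
  obtain g u0 where g: "intertwiner \<pi> U U g"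
    and gskew: "\<And>u w. u \<in> U \<Longrightarrow> w \<in> U \<Longrightarrow> inner (g u) w = - inner u (g w)"
    and u0: "u0 \<in> U" "g u0 \<noteq> 0"
    using skew_intertwiner_exists[OF ri pl irr nr] by blast
  have "linear g" using g by (simp add: intertwiner_def)
  have "intertwiner \<pi> U UNIV g" using g by (simp add: intertwiner_def)
  from intertwiner_rescaled_isometry[OF irr pl ri this u0]
  obtain k where k: "k \<noteq> 0" "\<And>u w. u \<in> U \<Longrightarrow> w \<in> U \<Longrightarrow> inner (k *\<^sub>R g u) (k *\<^sub>R g w) = inner u w"
    by blast
  define K where "K = (\<lambda>u. k *\<^sub>R g u)"
  have KU: "K u \<in> U" if "u \<in> U" for u
    using g that Us by (auto simp: K_def intertwiner_def subspace_mul)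
  have Kl: "linear K" unfolding K_def using \<open>linear g\<close> by (rule linear_compose_scale_right)
  have Ki: "inner (K u) (K w) = inner u w" if "u \<in> U" "w \<in> U" for u w
    using k(2)[OF that] by (simp add: K_def)
  have "K (K v) = - v" if "v \<in> U" for v
  proof (rule skew_isometry_square[OF Us KU _ Ki that])
    show "inner (K u) w = - inner u (K w)" if "u \<in> U" "w \<in> U" for u w
      using gskew[OF that] by (simp add: K_def)
  qed
  then obtain J where J: "orthogonal_complex_structure U J" "\<And>v. v \<in> U \<Longrightarrow> J v = K v"
    using orthogonal_complex_structure_extend[OF Us Kl KU _ Ki] by blast
  moreover have "intertwiner \<pi> U U K"
    using g KU Kl by (auto simp: intertwiner_def K_def linear_scale[OF pl])
  then have "intertwiner \<pi> U U J" using irreducible_subrepD(4)[OF irr]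
    by (rule intertwiner_cong) (use J in \<open>auto simp: orthogonal_complex_structure_def\<close>)
  with J(1) show thesis by (rule that)
qed

lemma isometric_isomorphism_exists:
  fixes \<pi> :: "'h \<Rightarrow> 'v::euclidean_space \<Rightarrow> 'v"
  assumes ri: "rep_invariant_inner \<pi>" and pl: "\<And>x. linear (\<pi> x)"
    and irr: "irreducible_subrep \<pi> U" and iso: "rep_isomorphic \<pi> U U'"
  obtains \<phi> \<psi> where "intertwiner \<pi> U U' \<phi>" "intertwiner \<pi> U' U \<psi>"
    "\<And>u. u \<in> U \<Longrightarrow> \<psi> (\<phi> u) = u" "\<And>w. w \<in> U' \<Longrightarrow> \<phi> (\<psi> w) = w"
    "\<And>u w. u \<in> U \<Longrightarrow> w \<in> U \<Longrightarrow> inner (\<phi> u) (\<phi> w) = inner u w"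
proof -
  note Us = irreducible_subrepD(1)[OF irr]
  obtain h where h: "intertwiner \<pi> U U' h" "bij_betw h U U'" using iso by (auto simp: rep_isomorphic_def)
  obtain h' where h': "intertwiner \<pi> U' U h'" "\<And>u. u \<in> U \<Longrightarrow> h' (h u) = u" "\<And>w. w \<in> U' \<Longrightarrow> h (h' w) = w"
    using intertwiner_inverse[OF irreducible_subrepD(4)[OF irr] h] by metis
  have hl: "linear h" and hl': "linear h'" using h(1) h'(1) by (auto simp: intertwiner_def)
  have Us': "subspace U'" using h(2) linear_subspace_image[OF hl Us] by (simp add: bij_betw_def)
  obtain u0 where u0: "u0 \<in> U" "u0 \<noteq> 0" using irreducible_subrepD(2)[OF irr] Us subspace_0 by blast
  then have "h u0 \<noteq> 0" using h'(2)[OF u0(1)] linear_0[OF hl'] by auto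
  moreover have "intertwiner \<pi> U UNIV h" using h(1) by (simp add: intertwiner_def)
  ultimately obtain k where k: "k \<noteq> 0"
    "\<And>u w. u \<in> U \<Longrightarrow> w \<in> U \<Longrightarrow> inner (k *\<^sub>R h u) (k *\<^sub>R h w) = inner u w"
    using intertwiner_rescaled_isometry[OF irr pl ri _ u0(1)] by metis
  show thesis
  proof (rule that[of "\<lambda>u. k *\<^sub>R h u" "\<lambda>w. (1 / k) *\<^sub>R h' w"])
    show "intertwiner \<pi> U U' (\<lambda>u. k *\<^sub>R h u)" "intertwiner \<pi> U' U (\<lambda>w. (1 / k) *\<^sub>R h' w)"
      using h(1) h'(1) Us Us'
      by (auto simp: intertwiner_def linear_scale[OF pl] linear_compose_scale_right subspace_mul)
  qed (use k h' linear_scale[OF hl] linear_scale[OF hl'] in auto)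
qed

lemma orthogonal_complex_structure_swap:
  fixes \<phi> \<psi> :: "'a::euclidean_space \<Rightarrow> 'a"
  assumes Us: "subspace U" and Us': "subspace U'" and UU': "\<And>a b. a \<in> U \<Longrightarrow> b \<in> U' \<Longrightarrow> inner a b = 0"
    and \<phi>: "linear \<phi>" "\<And>u. u \<in> U \<Longrightarrow> \<phi> u \<in> U'" and \<psi>: "linear \<psi>" "\<And>w. w \<in> U' \<Longrightarrow> \<psi> w \<in> U"
    and \<psi>\<phi>: "\<And>u. u \<in> U \<Longrightarrow> \<psi> (\<phi> u) = u" and \<phi>\<psi>: "\<And>w. w \<in> U' \<Longrightarrow> \<phi> (\<psi> w) = w"
    and \<phi>i: "\<And>u w. u \<in> U \<Longrightarrow> w \<in> U \<Longrightarrow> inner (\<phi> u) (\<phi> w) = inner u w"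
  obtains J where "orthogonal_complex_structure {a + b | a b. a \<in> U \<and> b \<in> U'} J"
    "\<And>a b. a \<in> U \<Longrightarrow> b \<in> U' \<Longrightarrow> J (a + b) = (- \<psi> b) + \<phi> a"
proof -
  have \<psi>i: "inner (\<psi> w) (\<psi> w') = inner w w'" if "w \<in> U'" "w' \<in> U'" for w w'
    using \<phi>i[OF \<psi>(2) \<psi>(2)] \<phi>\<psi> that by simp
  obtain P P' where P: "orthogonal_projection U P" and P': "orthogonal_projection U' P'"
    using orthogonal_projection_exists Us Us' by metis
  have U'U: "\<And>a b. a \<in> U \<Longrightarrow> b \<in> U' \<Longrightarrow> inner b a = 0" using UU' by (simp add: inner_commute)
  have Pab: "P (a + b) = a" "P' (a + b) = b" if "a \<in> U" "b \<in> U'" for a b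
  proof -
    have "a \<in> U'\<^sup>\<bottom>" "b \<in> U\<^sup>\<bottom>" using UU' U'U that by (auto simp: orthogonal_comp_iff)
    then show "P (a + b) = a" "P' (a + b) = b"
      using that P P' orthogonal_projection_id[OF P Us] orthogonal_projection_id[OF P' Us']
        orthogonal_projection_zero[OF P] orthogonal_projection_zero[OF P']
      by (auto simp: orthogonal_projection_def linear_add)
  qed
  define K where "K = (\<lambda>v. \<phi> (P v) - \<psi> (P' v))"
  have Kab: "K (a + b) = (- \<psi> b) + \<phi> a" if "a \<in> U" "b \<in> U'" for a b
    using Pab[OF that] by (simp add: K_def)
  have Kin: "- \<psi> b \<in> U" "\<phi> a \<in> U'" if "a \<in> U" "b \<in> U'" for a b
    using \<psi>(2) \<phi>(2) that Us by (auto simp: subspace_neg)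
  define A where "A = {a + b | a b. a \<in> U \<and> b \<in> U'}"
  have "subspace A" unfolding A_def using Us Us' by (rule subspace_sums)
  moreover have "linear K" unfolding K_def using \<phi>(1) \<psi>(1) P P'
    by (intro linear_compose_sub linear_compose[of P \<phi>, unfolded comp_def]
        linear_compose[of P' \<psi>, unfolded comp_def]) (auto simp: orthogonal_projection_def)
  moreover have "K v \<in> A" if "v \<in> A" for v
  proof -
    obtain a b where ab: "a \<in> U" "b \<in> U'" "v = a + b" using \<open>v \<in> A\<close> by (auto simp: A_def)
    then have "K v = (- \<psi> b) + \<phi> a" "- \<psi> b \<in> U" "\<phi> a \<in> U'" using Kab Kin by simp_all
    then show ?thesis unfolding A_def by blast
  qed
  moreover have "K (K v) = - v" if "v \<in> A" for v
  proof -
    obtain a b where ab: "a \<in> U" "b \<in> U'" "v = a + b" using \<open>v \<in> A\<close> by (auto simp: A_def)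
    then have "K (K v) = K ((- \<psi> b) + \<phi> a)" by (simp only: Kab)
    also have "\<dots> = (- \<psi> (\<phi> a)) + \<phi> (- \<psi> b)" by (rule Kab[OF Kin[OF ab(1,2)]])
    also have "\<dots> = - v" using \<psi>\<phi> \<phi>\<psi> ab \<phi>(1) by (simp add: linear_neg)
    finally show ?thesis .
  qed
  moreover have "inner (K v) (K w) = inner v w" if "v \<in> A" "w \<in> A" for v w
  proof -
    obtain a b a' b' where ab: "a \<in> U" "b \<in> U'" "v = a + b" "a' \<in> U" "b' \<in> U'" "w = a' + b'"
      using \<open>v \<in> A\<close> \<open>w \<in> A\<close> by (auto simp: A_def)
    have "inner (- \<psi> b) (\<phi> a') = 0" "inner (\<phi> a) (- \<psi> b') = 0" "inner a b' = 0" "inner b a' = 0"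
      using UU'[OF \<psi>(2)[OF ab(2)] \<phi>(2)[OF ab(4)]] U'U[OF \<psi>(2)[OF ab(5)] \<phi>(2)[OF ab(1)]]
        UU'[OF ab(1,5)] U'U[OF ab(4,2)] by simp_all
    then show ?thesis
      using Kab ab \<phi>i \<psi>i UU' U'U
      by (simp add: inner_add_left inner_add_right inner_diff_left inner_diff_right)
  qed
  ultimately obtain J where J: "orthogonal_complex_structure A J" "\<And>v. v \<in> A \<Longrightarrow> J v = K v"
    using orthogonal_complex_structure_extend by metis
  have "J (a + b) = (- \<psi> b) + \<phi> a" if "a \<in> U" "b \<in> U'" for a b
    using J(2)[of "a + b"] Kab[OF that] that by (auto simp: A_def)
  with J(1) show thesis unfolding A_def by (rule that)
qed

lemma equivariant_complex_structure_isomorphic_pair: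
  fixes \<pi> :: "'h \<Rightarrow> 'v::euclidean_space \<Rightarrow> 'v"
  assumes ri: "rep_invariant_inner \<pi>" and pl: "\<And>x. linear (\<pi> x)"
    and irr: "irreducible_subrep \<pi> U" and irr': "irreducible_subrep \<pi> U'"
    and UU': "\<And>a b. a \<in> U \<Longrightarrow> b \<in> U' \<Longrightarrow> inner a b = 0" and iso: "rep_isomorphic \<pi> U U'"
  obtains J where "orthogonal_complex_structure {a + b | a b. a \<in> U \<and> b \<in> U'} J"
    "intertwiner \<pi> {a + b | a b. a \<in> U \<and> b \<in> U'} {a + b | a b. a \<in> U \<and> b \<in> U'} J"
proof -
  obtain \<phi> \<psi> where \<phi>: "intertwiner \<pi> U U' \<phi>" and \<psi>: "intertwiner \<pi> U' U \<psi>"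
    and \<psi>\<phi>: "\<And>u. u \<in> U \<Longrightarrow> \<psi> (\<phi> u) = u" and \<phi>\<psi>: "\<And>w. w \<in> U' \<Longrightarrow> \<phi> (\<psi> w) = w"
    and \<phi>i: "\<And>u w. u \<in> U \<Longrightarrow> w \<in> U \<Longrightarrow> inner (\<phi> u) (\<phi> w) = inner u w"
    using isometric_isomorphism_exists[OF ri pl irr iso] by blast
  define A where "A = {a + b | a b. a \<in> U \<and> b \<in> U'}"
  have "linear \<phi>" "\<And>u. u \<in> U \<Longrightarrow> \<phi> u \<in> U'" "linear \<psi>" "\<And>w. w \<in> U' \<Longrightarrow> \<psi> w \<in> U"
    using \<phi> \<psi> by (auto simp: intertwiner_def)
  from orthogonal_complex_structure_swap[OF irreducible_subrepD(1)[OF irr] irreducible_subrepD(1)[OF irr']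
      UU' this \<psi>\<phi> \<phi>\<psi> \<phi>i]
  obtain J where J: "orthogonal_complex_structure A J"
    and Jab: "\<And>a b. a \<in> U \<Longrightarrow> b \<in> U' \<Longrightarrow> J (a + b) = (- \<psi> b) + \<phi> a"
    unfolding A_def by blast
  have "intertwiner \<pi> A A J"
    unfolding intertwiner_def
  proof (intro conjI allI ballI)
    fix x v assume "v \<in> A"
    then obtain a b where ab: "a \<in> U" "b \<in> U'" "v = a + b" by (auto simp: A_def)
    then have "J (\<pi> x v) = - \<psi> (\<pi> x b) + \<phi> (\<pi> x a)"
      using Jab irreducible_subrepD(3)[OF irr] irreducible_subrepD(3)[OF irr'] linear_add[OF pl] by simp
    then show "J (\<pi> x v) = \<pi> x (J v)"
      using Jab ab \<phi> \<psi> by (simp add: intertwiner_def linear_add[OF pl] linear_diff[OF pl])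
  qed (use J in \<open>auto simp: orthogonal_complex_structure_def\<close>)
  with J show thesis unfolding A_def by (rule that)
qed

lemma multiplicity_in_append:
  "multiplicity_in \<pi> (Us @ Vs) W = multiplicity_in \<pi> Us W + multiplicity_in \<pi> Vs W"
  by (simp add: multiplicity_in_conv_filter)

lemma even_real_multiplicities_reduce:
  assumes "even_real_multiplicities \<pi> S"
    and "\<And>Us. irreducible_decomposition_on \<pi> T Us \<Longrightarrow> irreducible_decomposition_on \<pi> S (Vs @ Us)"
    and "\<And>W. irreducible_subrep \<pi> W \<Longrightarrow> real_type \<pi> W \<Longrightarrow> even (multiplicity_in \<pi> Vs W)"
  shows "even_real_multiplicities \<pi> T"
  using assms unfolding even_real_multiplicities_def by (metis even_add multiplicity_in_append)

lemma isomorphic_summand_exists: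
  fixes \<pi> :: "'h \<Rightarrow> 'v::euclidean_space \<Rightarrow> 'v"
  assumes ri: "rep_invariant_inner \<pi>" and S: "invariant_subspace \<pi> S"
    and ev: "even_real_multiplicities \<pi> S"
    and U: "irreducible_subrep \<pi> U" "U \<subseteq> S" "real_type \<pi> U"
  obtains U' where "irreducible_subrep \<pi> U'" "U' \<subseteq> S \<inter> U\<^sup>\<bottom>" "rep_isomorphic \<pi> U U'"
proof -
  have sS: "subspace S" using S by (simp add: invariant_subspace_def)
  have "invariant_subspace \<pi> (S \<inter> U\<^sup>\<bottom>)"
    using invariant_subspace_Int[OF S invariant_subspace_orthogonal_comp[OF ri]]
      irreducible_subrepD(4)[OF U(1)] by blast
  then obtain Us where Us: "irreducible_decomposition_on \<pi> (S \<inter> U\<^sup>\<bottom>) Us"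
    using irreducible_decomposition_exists[OF ri] by blast
  then have "irreducible_decomposition_on \<pi> S (U # Us)"
    by (rule irreducible_decomposition_on_Cons[OF sS U(1,2)])
  then have "even (multiplicity_in \<pi> (U # Us) U)"
    using ev U by (auto simp: even_real_multiplicities_def)
  then have "odd (multiplicity_in \<pi> Us U)" by (simp add: multiplicity_in_Cons rep_isomorphic_refl)
  then have "filter (\<lambda>X. rep_isomorphic \<pi> X U) Us \<noteq> []"
    unfolding multiplicity_in_conv_filter by (metis even_zero list.size(3))
  then obtain U' where U': "U' \<in> set Us" "rep_isomorphic \<pi> U' U"
    unfolding filter_empty_conv by blast
  have "irreducible_subrep \<pi> U'" using Us U'(1) by (simp add: irreducible_decomposition_on_def)
  moreover have "U' \<subseteq> S \<inter> U\<^sup>\<bottom>"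
    using Us U'(1) span_superset[of "\<Union>(set Us)"] by (auto simp: irreducible_decomposition_on_def)
  moreover have "rep_isomorphic \<pi> U U'"
    using rep_isomorphic_sym[OF irreducible_subrepD(4) U'(2)] calculation(1) by blast
  ultimately show thesis by (rule that)
qed

lemma orthogonal_comp_sums:
  assumes "0 \<in> U" "0 \<in> U'"
  shows "{a + b | a b. a \<in> U \<and> b \<in> U'}\<^sup>\<bottom> = U\<^sup>\<bottom> \<inter> U'\<^sup>\<bottom>"
proof -
  have "U \<subseteq> {a + b | a b. a \<in> U \<and> b \<in> U'}" "U' \<subseteq> {a + b | a b. a \<in> U \<and> b \<in> U'}"
    using assms by force+
  then have "{a + b | a b. a \<in> U \<and> b \<in> U'}\<^sup>\<bottom> \<subseteq> U\<^sup>\<bottom> \<inter> U'\<^sup>\<bottom>"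
    using orthogonal_comp_anti_mono by blast
  moreover have "U\<^sup>\<bottom> \<inter> U'\<^sup>\<bottom> \<subseteq> {a + b | a b. a \<in> U \<and> b \<in> U'}\<^sup>\<bottom>"
    by (auto simp: orthogonal_comp_iff inner_add_right)
  ultimately show ?thesis by blast
qed

lemma dim_orthogonal_comp_Int_less:
  fixes A S :: "'a::euclidean_space set"
  assumes "subspace A" "subspace S" "A \<subseteq> S" "A \<noteq> {0}"
  shows "dim (S \<inter> A\<^sup>\<bottom>) < dim S"
proof -
  have "dim A > 0" using assms(1,4) dim_eq_0 subspace_0 by fastforce
  then show ?thesis using dim_orthogonal_comp_Int[OF assms(1-3)] by simp
qed

lemma equivariant_complex_structure_orthogonal_sum:
  fixes \<pi> :: "'h \<Rightarrow> 'v::euclidean_space \<Rightarrow> 'v"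
  assumes pl: "\<And>x. linear (\<pi> x)" and S: "invariant_subspace \<pi> S"
    and A: "invariant_subspace \<pi> A" "A \<subseteq> S" and B: "invariant_subspace \<pi> (S \<inter> A\<^sup>\<bottom>)"
    and JA: "orthogonal_complex_structure A JA" "intertwiner \<pi> A A JA"
    and JB: "orthogonal_complex_structure (S \<inter> A\<^sup>\<bottom>) JB" "intertwiner \<pi> (S \<inter> A\<^sup>\<bottom>) (S \<inter> A\<^sup>\<bottom>) JB"
  shows "\<exists>J. orthogonal_complex_structure S J \<and> intertwiner \<pi> S S J"
proof -
  have sA: "subspace A" and sS: "subspace S" and sB: "subspace (S \<inter> A\<^sup>\<bottom>)"
    using A(1) S B by (auto simp: invariant_subspace_def)
  have AB: "inner a b = 0" if "a \<in> A" "b \<in> S \<inter> A\<^sup>\<bottom>" for a b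
    using that by (auto simp: orthogonal_comp_iff inner_commute)
  have "{a + b | a b. a \<in> A \<and> b \<in> S \<inter> A\<^sup>\<bottom>} = S" by (rule sums_orthogonal_comp_Int[OF sA sS A(2)])
  moreover have "orthogonal_complex_structure {a + b | a b. a \<in> A \<and> b \<in> S \<inter> A\<^sup>\<bottom>} (\<lambda>v. JA v + JB v)"
    using orthogonal_complex_structure_sum[OF sA sB _ JA(1) JB(1)] AB by blast
  moreover have "intertwiner \<pi> {a + b | a b. a \<in> A \<and> b \<in> S \<inter> A\<^sup>\<bottom>} {a + b | a b. a \<in> A \<and> b \<in> S \<inter> A\<^sup>\<bottom>}
      (\<lambda>v. JA v + JB v)"
    using intertwiner_orthogonal_complex_structure_sum[OF pl _ _ _ JA JB] AB A(1) B
    by (auto simp: invariant_subspace_def)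
  ultimately show ?thesis by auto
qed

lemma even_real_multiplicities_orthogonal_comp_not_real_type:
  fixes \<pi> :: "'h \<Rightarrow> 'v::euclidean_space \<Rightarrow> 'v"
  assumes sS: "subspace S" and U: "irreducible_subrep \<pi> U" "U \<subseteq> S" and nr: "\<not> real_type \<pi> U"
    and ev: "even_real_multiplicities \<pi> S"
  shows "even_real_multiplicities \<pi> (S \<inter> U\<^sup>\<bottom>)"
proof (rule even_real_multiplicities_reduce[OF ev, of _ "[U]"])
  show "irreducible_decomposition_on \<pi> S ([U] @ Us)"
    if "irreducible_decomposition_on \<pi> (S \<inter> U\<^sup>\<bottom>) Us" for Us
    using irreducible_decomposition_on_Cons[OF sS U that] by simp
  show "even (multiplicity_in \<pi> [U] W)" if "irreducible_subrep \<pi> W" "real_type \<pi> W" for W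
    using real_type_if_isomorphic[OF irreducible_subrepD(4)[OF U(1)] _ that(2)] nr
    by (auto simp: multiplicity_in_conv_filter)
qed

lemma even_real_multiplicities_orthogonal_comp_pair:
  fixes \<pi> :: "'h \<Rightarrow> 'v::euclidean_space \<Rightarrow> 'v"
  assumes sS: "subspace S" and U: "irreducible_subrep \<pi> U" "U \<subseteq> S"
    and U': "irreducible_subrep \<pi> U'" "U' \<subseteq> S \<inter> U\<^sup>\<bottom>" "rep_isomorphic \<pi> U U'"
    and ev: "even_real_multiplicities \<pi> S"
  shows "even_real_multiplicities \<pi> (S \<inter> {a + b | a b. a \<in> U \<and> b \<in> U'}\<^sup>\<bottom>)"
proof (rule even_real_multiplicities_reduce[OF ev, of _ "[U, U']"])
  fix Us assume "irreducible_decomposition_on \<pi> (S \<inter> {a + b | a b. a \<in> U \<and> b \<in> U'}\<^sup>\<bottom>) Us"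
  moreover have "0 \<in> U" "0 \<in> U'" using irreducible_subrepD(1) U(1) U'(1) subspace_0 by blast+
  then have "S \<inter> {a + b | a b. a \<in> U \<and> b \<in> U'}\<^sup>\<bottom> = (S \<inter> U\<^sup>\<bottom>) \<inter> U'\<^sup>\<bottom>"
    by (simp add: orthogonal_comp_sums Int_assoc)
  moreover have "subspace (S \<inter> U\<^sup>\<bottom>)" using sS subspace_orthogonal_comp by (rule subspace_inter)
  ultimately show "irreducible_decomposition_on \<pi> S ([U, U'] @ Us)"
    using irreducible_decomposition_on_Cons[OF _ U'(1,2)] irreducible_decomposition_on_Cons[OF sS U]
    by simp
next
  fix W
  have "rep_isomorphic \<pi> U' W \<longleftrightarrow> rep_isomorphic \<pi> U W"
    using rep_isomorphic_trans[OF U'(3)]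
      rep_isomorphic_trans[OF rep_isomorphic_sym[OF irreducible_subrepD(4)[OF U(1)] U'(3)]]
    by blast
  then show "even (multiplicity_in \<pi> [U, U'] W)" by (simp add: multiplicity_in_conv_filter)
qed

lemma equivariant_complex_structure_exists:
  fixes \<pi> :: "'h \<Rightarrow> 'v::euclidean_space \<Rightarrow> 'v"
  assumes ri: "rep_invariant_inner \<pi>" and pl: "\<And>x. linear (\<pi> x)"
  shows "invariant_subspace \<pi> S \<Longrightarrow> even_real_multiplicities \<pi> S \<Longrightarrow>
    \<exists>J. orthogonal_complex_structure S J \<and> intertwiner \<pi> S S J"
proof (induction "dim S" arbitrary: S rule: less_induct)
  case less
  note S = less.prems(1) and ev = less.prems(2)
  have sS: "subspace S" using S by (simp add: invariant_subspace_def)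
  have step: "\<exists>J. orthogonal_complex_structure S J \<and> intertwiner \<pi> S S J"
    if A: "invariant_subspace \<pi> A" "A \<subseteq> S" "A \<noteq> {0}"
      and JA: "orthogonal_complex_structure A JA" "intertwiner \<pi> A A JA"
      and evA: "even_real_multiplicities \<pi> (S \<inter> A\<^sup>\<bottom>)" for A JA
  proof -
    have inv: "invariant_subspace \<pi> (S \<inter> A\<^sup>\<bottom>)"
      using invariant_subspace_Int[OF S invariant_subspace_orthogonal_comp[OF ri A(1)]] .
    moreover have "dim (S \<inter> A\<^sup>\<bottom>) < dim S"
      using dim_orthogonal_comp_Int_less[OF _ sS A(2,3)] A(1) by (simp add: invariant_subspace_def)
    ultimately obtain JB where "orthogonal_complex_structure (S \<inter> A\<^sup>\<bottom>) JB"
      "intertwiner \<pi> (S \<inter> A\<^sup>\<bottom>) (S \<inter> A\<^sup>\<bottom>) JB"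
      using less.hyps evA by blast
    then show ?thesis using equivariant_complex_structure_orthogonal_sum[OF pl S A(1,2) inv JA] by blast
  qed
  show ?case
  proof (cases "S = {0}")
    case True
    then show ?thesis using orthogonal_complex_structure_zero linear_0[OF pl]
      by (intro exI[of _ "\<lambda>_. 0"]) (auto simp: intertwiner_def linear_zero)
  next
    case False
    obtain U where U: "irreducible_subrep \<pi> U" "U \<subseteq> S" using irreducible_subrep_exists[OF S False] .
    note invU = irreducible_subrepD(4)[OF U(1)]
    show ?thesis
    proof (cases "real_type \<pi> U")
      case False
      obtain JU where "orthogonal_complex_structure U JU" "intertwiner \<pi> U U JU"
        using equivariant_complex_structure_not_real_type[OF ri pl U(1) False] .
      from step[OF invU U(2) irreducible_subrepD(2)[OF U(1)] this
          even_real_multiplicities_orthogonal_comp_not_real_type[OF sS U False ev]]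
      show ?thesis .
    next
      case True
      obtain U' where U': "irreducible_subrep \<pi> U'" "U' \<subseteq> S \<inter> U\<^sup>\<bottom>" "rep_isomorphic \<pi> U U'"
        using isomorphic_summand_exists[OF ri S ev U True] .
      have sU: "subspace U" and sU': "subspace U'" using irreducible_subrepD(1) U(1) U'(1) by blast+
      define A where "A = {a + b | a b. a \<in> U \<and> b \<in> U'}"
      have UU': "inner a b = 0" if "a \<in> U" "b \<in> U'" for a b
        using that U'(2) by (auto simp: orthogonal_comp_iff inner_commute)
      obtain JA where JA: "orthogonal_complex_structure A JA" "intertwiner \<pi> A A JA"
        using equivariant_complex_structure_isomorphic_pair[OF ri pl U(1) U'(1) UU' U'(3)]
        unfolding A_def by blast
      have "invariant_subspace \<pi> A"
        unfolding A_def by (rule invariant_subspace_sums[OF pl invU irreducible_subrepD(4)[OF U'(1)]])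
      moreover have "A \<subseteq> S" using U(2) U'(2) subspace_add[OF sS] by (auto simp: A_def)
      moreover have "U \<subseteq> A" using subspace_0[OF sU'] by (force simp: A_def)
      then have "A \<noteq> {0}" using irreducible_subrepD(2)[OF U(1)] subspace_0[OF sU] by auto
      moreover have "even_real_multiplicities \<pi> (S \<inter> A\<^sup>\<bottom>)"
        unfolding A_def by (rule even_real_multiplicities_orthogonal_comp_pair[OF sS U U' ev])
      ultimately show ?thesis using step JA by blast
    qed
  qed
qed

lemma intertwiner_scalar_multiple:
  fixes \<pi> :: "'h \<Rightarrow> 'v::euclidean_space \<Rightarrow> 'v"
  assumes W: "invariant_subspace \<pi> W" "real_type \<pi> W"
    and \<phi>: "intertwiner \<pi> W U \<phi>" "bij_betw \<phi> W U" and h: "intertwiner \<pi> W U h"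
  obtains c where "\<And>w. w \<in> W \<Longrightarrow> h w = c *\<^sub>R \<phi> w"
proof -
  obtain \<psi> where \<psi>: "intertwiner \<pi> U W \<psi>" "\<And>w. w \<in> U \<Longrightarrow> \<phi> (\<psi> w) = w"
    using intertwiner_inverse[OF W(1) \<phi>] by metis
  have "intertwiner \<pi> W W (\<psi> \<circ> h)"
    using \<psi>(1) h by (fastforce simp: intertwiner_def image_subset_iff intro: linear_compose)
  then obtain c where c: "\<forall>w\<in>W. (\<psi> \<circ> h) w = c *\<^sub>R w" using W(2) unfolding real_type_def by blast
  have "h w = c *\<^sub>R \<phi> w" if "w \<in> W" for w
  proof -
    have "h w = \<phi> (\<psi> (h w))" using \<psi>(2) h that by (auto simp: intertwiner_def)
    also have "\<dots> = c *\<^sub>R \<phi> w" using c that \<phi>(1) by (simp add: intertwiner_def linear_scale)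
    finally show ?thesis .
  qed
  then show thesis by (rule that)
qed

lemma independent_direct_sum_vectors:
  assumes P: "\<And>k. linear (P k)" "\<And>k j u. k \<in> I \<Longrightarrow> j \<in> I \<Longrightarrow> u \<in> Us j \<Longrightarrow> P k u = (if k = j then u else 0)"
    and v: "\<And>i. i \<in> I \<Longrightarrow> v i \<in> Us i" "\<And>i. i \<in> I \<Longrightarrow> v i \<noteq> 0" and I: "finite I"
  shows "inj_on v I" "independent (v ` I)"
proof -
  show inj: "inj_on v I"
  proof (rule inj_onI)
    fix i j assume "i \<in> I" "j \<in> I" "v i = v j"
    then have "P i (v i) = P i (v j)" by simp
    then show "i = j" using P(2) v \<open>i \<in> I\<close> \<open>j \<in> I\<close> by (auto split: if_splits)
  qed
  show "independent (v ` I)"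
  proof (rule independent_if_scalars_zero)
    fix c and y assume s: "(\<Sum>y\<in>v ` I. c y *\<^sub>R y) = 0" and "y \<in> v ` I"
    then obtain k where k: "k \<in> I" "y = v k" by blast
    have "(\<Sum>i\<in>I. c (v i) *\<^sub>R v i) = 0" using s sum.reindex[OF inj, of "\<lambda>y. c y *\<^sub>R y"] by simp
    then have "0 = P k (\<Sum>i\<in>I. c (v i) *\<^sub>R v i)" using linear_0[OF P(1)] by simp
    also have "\<dots> = (\<Sum>i\<in>I. if i = k then c (v k) *\<^sub>R v k else 0)"
      using P(2)[OF k(1) _ v(1)] k(1)
      by (auto simp: linear_sum[OF P(1)] linear_scale[OF P(1)] intro: sum.cong)
    also have "\<dots> = c (v k) *\<^sub>R v k" using k(1) I by simp
    finally show "c y = 0" using v(2)[OF k(1)] k(2) by simp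
  qed (use I in simp)
qed

text \<open>Each component \<open>P j \<circ> g\<close> of \<open>g\<close> is a multiple of \<open>\<phi> j\<close> since \<open>W\<close> has real type, or
  vanishes by Schur's lemma.\<close>
lemma intertwiner_in_span_of_copies:
  fixes \<pi> :: "'h \<Rightarrow> 'v::euclidean_space \<Rightarrow> 'v"
  assumes pl: "\<And>x. linear (\<pi> x)" and W: "irreducible_subrep \<pi> W" "real_type \<pi> W"
    and U: "\<And>i. i < n \<Longrightarrow> irreducible_subrep \<pi> (Us i)"
    and P: "\<And>i. linear (P i)" "\<And>i v. i < n \<Longrightarrow> P i v \<in> Us i"
      "\<And>i x v. i < n \<Longrightarrow> P i (\<pi> x v) = \<pi> x (P i v)" "\<And>v. (\<Sum>i<n. P i v) = v"
    and I: "I = {i. i < n \<and> rep_isomorphic \<pi> (Us i) W}"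
    and \<phi>: "\<And>i. i \<in> I \<Longrightarrow> intertwiner \<pi> W (Us i) (\<phi> i)" "\<And>i. i \<in> I \<Longrightarrow> bij_betw (\<phi> i) W (Us i)"
    and g: "intertwiner \<pi> W UNIV g" and w: "w \<in> W"
  shows "g w \<in> span ((\<lambda>i. \<phi> i w) ` I)"
proof -
  have "P j (g w) \<in> span ((\<lambda>i. \<phi> i w) ` I)" if j: "j < n" for j
  proof -
    have h: "intertwiner \<pi> W (Us j) (P j \<circ> g)"
      using g P j by (auto simp: intertwiner_def linear_compose)
    show ?thesis
    proof (cases "j \<in> I")
      case True
      obtain c where "\<And>w. w \<in> W \<Longrightarrow> (P j \<circ> g) w = c *\<^sub>R \<phi> j w"
        using intertwiner_scalar_multiple[OF irreducible_subrepD(4)[OF W(1)] W(2) \<phi>[OF True] h] by blast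
      then have "P j (g w) = c *\<^sub>R \<phi> j w" using w by simp
      then show ?thesis using True by (simp add: span_mul span_base)
    next
      case False
      then have "\<not> bij_betw (P j \<circ> g) W (Us j)"
        using h rep_isomorphic_sym[OF irreducible_subrepD(4)[OF W(1)]] j
        by (auto simp: I rep_isomorphic_def)
      then have "P j (g w) = 0" using intertwiner_zero_or_bij[OF W(1) U[OF j] pl h] w by auto
      then show ?thesis by (simp add: span_zero)
    qed
  qed
  then have "(\<Sum>j<n. P j (g w)) \<in> span ((\<lambda>i. \<phi> i w) ` I)" by (intro span_sum) auto
  then show ?thesis using P(4) by simp
qed

lemma even_multiplicity_if_equivariant_complex_structure:
  fixes \<pi> :: "'h \<Rightarrow> 'v::euclidean_space \<Rightarrow> 'v"
  assumes pl: "\<And>x. linear (\<pi> x)"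
    and J: "orthogonal_complex_structure UNIV J" "intertwiner \<pi> UNIV UNIV J"
    and W: "irreducible_subrep \<pi> W" "real_type \<pi> W" and Us: "irreducible_decomposition_on \<pi> UNIV Us"
  shows "even (multiplicity_in \<pi> Us W)"
proof -
  define n where "n = length Us"
  define I where "I = {i. i < n \<and> rep_isomorphic \<pi> (Us!i) W}"
  have irrU: "irreducible_subrep \<pi> (Us!i)" if "i < n" for i
    using Us that by (simp add: irreducible_decomposition_on_def n_def)
  obtain P where Pl: "\<And>i. linear (P i)" and PU: "\<And>i v. i < n \<Longrightarrow> P i v \<in> Us!i"
    and Pu: "\<And>i j u. i < n \<Longrightarrow> j < n \<Longrightarrow> u \<in> Us!j \<Longrightarrow> P i u = (if i = j then u else 0)"
    and Psum: "\<And>v. (\<Sum>i<n. P i v) = v"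
    using direct_sum_projections[of Us] Us irreducible_subrepD(1)[OF irrU]
    unfolding irreducible_decomposition_on_def n_def by auto
  have Pc: "P i (\<pi> x v) = \<pi> x (P i v)" if "i < n" for i x v
    using direct_sum_projection_commute[OF pl _ Pl PU Pu[OF that] Psum that]
      irreducible_subrepD(3)[OF irrU] by blast
  have "\<forall>i. \<exists>\<phi>. i \<in> I \<longrightarrow> intertwiner \<pi> W (Us!i) \<phi> \<and> bij_betw \<phi> W (Us!i)"
    using rep_isomorphic_sym[OF irreducible_subrepD(4)[OF irrU]] by (auto simp: I_def rep_isomorphic_def)
  then obtain \<phi> where \<phi>: "\<And>i. i \<in> I \<Longrightarrow> intertwiner \<pi> W (Us!i) (\<phi> i)"
    "\<And>i. i \<in> I \<Longrightarrow> bij_betw (\<phi> i) W (Us!i)"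
    by metis
  obtain w0 where w0: "w0 \<in> W" "w0 \<noteq> 0" using irreducible_subrepD(1,2)[OF W(1)] subspace_0 by blast
  define v where "v i = \<phi> i w0" for i
  define E where "E = span (v ` I)"
  have "J (v i) \<in> E" if "i \<in> I" for i
  proof -
    have "intertwiner \<pi> W UNIV (J \<circ> \<phi> i)"
      using \<phi>(1)[OF that] J(2) by (auto simp: intertwiner_def linear_compose)
    from intertwiner_in_span_of_copies[OF pl W irrU Pl PU Pc Psum I_def \<phi> this w0(1)]
    show ?thesis by (simp add: E_def v_def)
  qed
  then have "span (J ` v ` I) \<subseteq> E" unfolding E_def by (intro span_minimal) auto
  then have "J ` E \<subseteq> E"
    using J(1) span_linear_image[of J "v ` I"] by (simp add: E_def orthogonal_complex_structure_def)
  then have "even (dim E)"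
    using J(1) even_dim_if_complex_structure[of J E] by (auto simp: E_def orthogonal_complex_structure_def)
  moreover have "v i \<in> Us!i" "v i \<noteq> 0" if "i \<in> I" for i
    using \<phi>[OF that] w0 subspace_0[OF irreducible_subrepD(1)[OF W(1)]]
    by (auto simp: v_def intertwiner_def bij_betw_def inj_on_def linear_0)
  then have "inj_on v I" "independent (v ` I)"
    using independent_direct_sum_vectors[of P I "\<lambda>i. Us!i" v] Pl Pu by (auto simp: I_def)
  then have "dim E = card I" by (simp add: E_def dim_eq_card_independent card_image)
  moreover have "multiplicity_in \<pi> Us W = card I" by (simp add: multiplicity_in_def I_def n_def)
  ultimately show ?thesis by simp
qed

lemma equivariant_complex_structure_iff_even_real_multiplicities:
  fixes \<pi> :: "'h \<Rightarrow> 'v::euclidean_space \<Rightarrow> 'v"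
  assumes ri: "rep_invariant_inner \<pi>" and pl: "\<And>x. linear (\<pi> x)"
  shows "(\<exists>J. orthogonal_complex_structure UNIV J \<and> intertwiner \<pi> UNIV UNIV J)
    \<longleftrightarrow> even_real_multiplicities \<pi> UNIV"
proof
  show "even_real_multiplicities \<pi> UNIV"
    if "\<exists>J. orthogonal_complex_structure UNIV J \<and> intertwiner \<pi> UNIV UNIV J"
    using that even_multiplicity_if_equivariant_complex_structure[OF pl]
    by (auto simp: even_real_multiplicities_def)
  show "\<exists>J. orthogonal_complex_structure UNIV J \<and> intertwiner \<pi> UNIV UNIV J"
    if "even_real_multiplicities \<pi> UNIV"
    using equivariant_complex_structure_exists[OF ri pl _ that] by (simp add: invariant_subspace_def)
qed

section \<open>The two-step nilpotent Lie algebra\<close>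

lemma vbracket_eq_iff:
  fixes \<pi> :: "'h::euclidean_space \<Rightarrow> 'v::real_inner \<Rightarrow> 'v"
  assumes lx: "\<And>v. linear (\<lambda>x. \<pi> x v)"
  shows "vbracket \<pi> v w = z \<longleftrightarrow> (\<forall>x. inner z x = inner (\<pi> x v) w)"
proof -
  define z0 where "z0 = (\<Sum>b\<in>Basis. inner (\<pi> b v) w *\<^sub>R b)"
  have "inner z0 x = inner (\<pi> x v) w" for x
  proof -
    have "\<pi> x v = (\<Sum>b\<in>Basis. inner x b *\<^sub>R \<pi> b v)"
      using linear_sum[OF lx[of v], of "\<lambda>b. inner x b *\<^sub>R b" Basis] linear_scale[OF lx[of v]]
      by (simp add: euclidean_representation)
    then have "inner (\<pi> x v) w = (\<Sum>b\<in>Basis. inner x b * inner (\<pi> b v) w)"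
      by (simp add: inner_sum_left)
    moreover have "inner z0 x = (\<Sum>b\<in>Basis. inner (\<pi> b v) w * inner b x)"
      by (simp add: z0_def inner_sum_left)
    ultimately show ?thesis by (simp add: inner_commute mult.commute)
  qed
  then have z0: "\<forall>x. inner z0 x = inner (\<pi> x v) w" by blast
  have uniq: "z' = z0" if "\<forall>x. inner z' x = inner (\<pi> x v) w" for z'
    by (rule eq_if_inner_eq_on_subspace[OF subspace_UNIV]) (use that z0 in simp_all)
  have "vbracket \<pi> v w = z0" unfolding vbracket_def using z0 uniq by (rule the_equality)
  then show ?thesis using z0 uniq[of z] by auto
qed

lemma inner_vbracket:
  fixes \<pi> :: "'h::euclidean_space \<Rightarrow> 'v::real_inner \<Rightarrow> 'v"
  assumes "\<And>v. linear (\<lambda>x. \<pi> x v)"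
  shows "inner (vbracket \<pi> v w) x = inner (\<pi> x v) w"
  using vbracket_eq_iff[of \<pi> v w "vbracket \<pi> v w", OF assms] by simp

lemma vbracket_uminus_right:
  fixes \<pi> :: "'h::euclidean_space \<Rightarrow> 'v::real_inner \<Rightarrow> 'v"
  assumes "\<And>v. linear (\<lambda>x. \<pi> x v)"
  shows "vbracket \<pi> a (- b) = - vbracket \<pi> a b"
  by (simp add: vbracket_eq_iff[of \<pi>, OF assms] inner_vbracket[of \<pi>, OF assms])

lemma vbracket_isometric_intertwiner:
  fixes \<pi> :: "'h::euclidean_space \<Rightarrow> 'v::real_inner \<Rightarrow> 'v"
  assumes "\<And>v. linear (\<lambda>x. \<pi> x v)" and "\<And>v w. inner (K v) (K w) = inner v w"
    and "\<And>x v. K (\<pi> x v) = \<pi> x (K v)"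
  shows "vbracket \<pi> (K a) (K b) = vbracket \<pi> a b"
  by (simp add: vbracket_eq_iff[of \<pi>, OF assms(1)] inner_vbracket[of \<pi>, OF assms(1)] assms(2)
      flip: assms(3))

lemma complex_structure_on_if_abelian:
  assumes J: "linear J" "J ` N \<subseteq> N" "\<And>u. u \<in> N \<Longrightarrow> J (J u) = - u" and ab: "abelian_cs N br J"
    and neg: "\<And>u w. br u (- w) = - br u w"
  shows "complex_structure_on N br J"
  unfolding complex_structure_on_def
proof (intro conjI ballI J(1,2))
  fix u w assume uw: "u \<in> N" "w \<in> N"
  have "br u (J w) = br (J u) (J (J w))" using ab uw J(2) by (auto simp: abelian_cs_def)
  then have "br (J u) w + br u (J w) = 0" using J(3)[OF uw(2)] neg by simp
  then show "br u w + J (br (J u) w + br u (J w)) - br (J u) (J w) = 0"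
    using ab uw linear_0[OF J(1)] by (simp add: abelian_cs_def)
qed (use J(3) in simp)

lemma abelian_cs_preserves_centre:
  fixes \<pi> :: "'h::euclidean_space \<Rightarrow> 'v::euclidean_space \<Rightarrow> 'v"
  assumes pl: "\<And>x. linear (\<pi> x)" and lx: "\<And>v. linear (\<lambda>x. \<pi> x v)" and nt: "no_trivial_part \<pi>"
    and J: "\<And>p. p \<in> ncarrier s \<Longrightarrow> J p \<in> ncarrier s" "\<And>p. p \<in> ncarrier s \<Longrightarrow> J (J p) = - p"
    and ab: "abelian_cs (ncarrier s) (nbracket \<pi>) J"
    and c: "c \<in> ncarrier s" "snd (snd c) = 0"
  shows "snd (snd (J c)) = 0"
proof -
  define a where "a = snd (snd (J c))"
  \<comment> \<open>\<open>J c\<close> is central because \<open>[J c, y] = [J (J c), J y] = -[c, J y] = 0\<close>.\<close>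
  have "vbracket \<pi> a y = 0" for y
  proof -
    have "(0, 0, y) \<in> ncarrier s" by (simp add: ncarrier_def)
    then have "nbracket \<pi> (J (J c)) (J (0, 0, y)) = nbracket \<pi> (J c) (0, 0, y)"
      using ab J(1)[OF c(1)] J(1) unfolding abelian_cs_def by blast
    then have "vbracket \<pi> 0 (snd (snd (J (0, 0, y)))) = vbracket \<pi> a y"
      using J(2)[OF c(1)] c(2) by (simp add: nbracket_def a_def)
    moreover have "vbracket \<pi> 0 u = 0" for u using linear_0[OF pl] by (simp add: vbracket_eq_iff[of \<pi>, OF lx])
    ultimately show ?thesis by simp
  qed
  then have "inner (\<pi> x a) (\<pi> x a) = 0" for x using inner_vbracket[of \<pi> a "\<pi> x a" x, OF lx] by simp
  then show ?thesis using nt by (simp add: no_trivial_part_def a_def)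
qed

lemma abelian_orthogonal_cs_preserves_V:
  fixes \<pi> :: "'h::euclidean_space \<Rightarrow> 'v::euclidean_space \<Rightarrow> 'v"
  assumes pl: "\<And>x. linear (\<pi> x)" and lx: "\<And>v. linear (\<lambda>x. \<pi> x v)" and nt: "no_trivial_part \<pi>"
    and J: "\<And>p. p \<in> ncarrier s \<Longrightarrow> J p \<in> ncarrier s" "\<And>p. p \<in> ncarrier s \<Longrightarrow> J (J p) = - p"
    and ab: "abelian_cs (ncarrier s) (nbracket \<pi>) J" and oc: "orthogonal_cs (ncarrier s) J"
  shows "J (0, 0, v) = (0, 0, snd (snd (J (0, 0, v))))"
proof -
  define p where "p = J (0, 0, v)"
  define c where "c = (fst p, fst (snd p), 0 :: 'v)"
  have N: "(0, 0, v) \<in> ncarrier s" "c \<in> ncarrier s"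
    using J(1)[of "(0, 0, v)"] by (auto simp: ncarrier_def c_def p_def)
  \<comment> \<open>\<open>p\<close> is orthogonal to the centre, which \<open>J\<close> preserves.\<close>
  have Jc: "snd (snd (J c)) = 0"
    using abelian_cs_preserves_centre[OF pl lx nt J ab N(2)] by (simp add: c_def)
  have "p \<in> ncarrier s" using J(1)[OF N(1)] by (simp add: p_def)
  then have "inner p c = inner (J p) (J c)" using oc N(2) unfolding orthogonal_cs_def by simp
  also have "\<dots> = - inner v (snd (snd (J c)))"
    using J(2)[OF N(1)] by (simp add: p_def inner_prod_def)
  finally have "fst p * fst p + inner (fst (snd p)) (fst (snd p)) = 0"
    using Jc by (simp add: c_def inner_prod_def)
  moreover have "fst p * fst p \<ge> 0" "inner (fst (snd p)) (fst (snd p)) \<ge> 0" by simp_all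
  ultimately have "fst p * fst p = 0" "inner (fst (snd p)) (fst (snd p)) = 0" by linarith+
  then have "fst p = 0" "fst (snd p) = 0" by simp_all
  then show ?thesis by (simp add: p_def[symmetric] prod_eq_iff)
qed

lemma equivariant_complex_structure_if_abelian_cs:
  fixes \<pi> :: "'h::euclidean_space \<Rightarrow> 'v::euclidean_space \<Rightarrow> 'v"
  assumes pl: "\<And>x. linear (\<pi> x)" and lx: "\<And>v. linear (\<lambda>x. \<pi> x v)" and nt: "no_trivial_part \<pi>"
    and cs: "complex_structure_on (ncarrier s) (nbracket \<pi>) J"
    and ab: "abelian_cs (ncarrier s) (nbracket \<pi>) J" and oc: "orthogonal_cs (ncarrier s) J"
  obtains JV where "orthogonal_complex_structure UNIV JV" "intertwiner \<pi> UNIV UNIV JV"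
proof -
  have Jl: "linear J" and JN: "\<And>p. p \<in> ncarrier s \<Longrightarrow> J p \<in> ncarrier s"
    and JJ: "\<And>p. p \<in> ncarrier s \<Longrightarrow> J (J p) = - p"
    using cs by (auto simp: complex_structure_on_def)
  have N: "(0, 0, v) \<in> (ncarrier s :: (real \<times> 'h \<times> 'v) set)" for v :: 'v
    by (simp add: ncarrier_def)
  define JV where "JV v = snd (snd (J (0, 0, v)))" for v
  have Ji: "J (0, 0, v) = (0, 0, JV v)" for v
    using abelian_orthogonal_cs_preserves_V[OF pl lx nt JN JJ ab oc] by (simp add: JV_def)
  have "linear JV"
  proof (rule linearI)
    show "JV (a + b) = JV a + JV b" for a b
      using linear_add[OF Jl, of "(0, 0, a)" "(0, 0, b)"] by (simp add: JV_def)
    show "JV (r *\<^sub>R a) = r *\<^sub>R JV a" for r a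
      using linear_scale[OF Jl, of r "(0, 0, a)"] by (simp add: JV_def)
  qed
  moreover have JV2: "JV (JV v) = - v" for v using JJ[OF N] by (simp add: Ji)
  moreover have JVi: "inner (JV v) (JV w) = inner v w" for v w
  proof -
    have "inner (J (0, 0, v)) (J (0, 0, w)) = inner ((0, 0, v) :: real \<times> 'h \<times> 'v) (0, 0, w)"
      using oc N[of v] N[of w] unfolding orthogonal_cs_def by blast
    then show ?thesis by (simp add: Ji)
  qed
  moreover have "JV (\<pi> x v) = \<pi> x (JV v)" for x v
  proof (rule eq_if_inner_eq_on_subspace[OF subspace_UNIV])
    fix y
    have "nbracket \<pi> (J (0, 0, v)) (J (0, 0, - JV y)) = nbracket \<pi> (0, 0, v) (0, 0, - JV y)"
      using ab N unfolding abelian_cs_def by blast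
    then have "inner (vbracket \<pi> (JV v) (JV (- JV y))) x = inner (vbracket \<pi> v (- JV y)) x"
      by (simp add: nbracket_def Ji)
    then have "inner (\<pi> x (JV v)) (JV (- JV y)) = inner (\<pi> x v) (- JV y)"
      by (simp only: inner_vbracket[of \<pi>, OF lx])
    also have "\<dots> = inner (JV (\<pi> x v)) (JV (- JV y))" using JVi by simp
    finally show "inner (JV (\<pi> x v)) y = inner (\<pi> x (JV v)) y"
      using JV2 linear_neg[OF \<open>linear JV\<close>] by simp
  qed simp_all
  ultimately show thesis
    by (intro that) (auto simp: orthogonal_complex_structure_def intertwiner_def linear_0)
qed

lemma even_dim_centre:
  fixes s :: nat
  assumes "s \<le> 1" "DIM('h::euclidean_space) mod 2 = s mod 2"
  shows "even (dim {q :: real \<times> 'h. s = 0 \<longrightarrow> fst q = 0})"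
proof (cases "s = 0")
  case True
  have "linear (Pair (0::real) :: 'h \<Rightarrow> real \<times> 'h)" by (rule linearI) simp_all
  moreover have "{q :: real \<times> 'h. s = 0 \<longrightarrow> fst q = 0} = Pair 0 ` UNIV" using True by force
  ultimately have "dim {q :: real \<times> 'h. s = 0 \<longrightarrow> fst q = 0} = DIM('h)"
    using dim_image_eq[of "Pair (0::real)" UNIV] by (simp add: inj_on_def)
  then show ?thesis using assms True by (simp add: even_iff_mod_2_eq_zero)
next
  case False
  then have "{q :: real \<times> 'h. s = 0 \<longrightarrow> fst q = 0} = UNIV" by simp
  then show ?thesis using assms False by (simp add: even_iff_mod_2_eq_zero) presburger
qed

lemma abelian_cs_if_equivariant_complex_structure:
  fixes \<pi> :: "'h::euclidean_space \<Rightarrow> 'v::euclidean_space \<Rightarrow> 'v"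
  assumes lx: "\<And>v. linear (\<lambda>x. \<pi> x v)"
    and JV: "orthogonal_complex_structure UNIV JV" "intertwiner \<pi> UNIV UNIV JV"
    and s: "s \<le> 1" "DIM('h) mod 2 = s mod 2"
  shows "\<exists>J. complex_structure_on (ncarrier s) (nbracket \<pi>) J \<and>
    abelian_cs (ncarrier s) (nbracket \<pi>) J \<and> orthogonal_cs (ncarrier s) J"
proof -
  have JVl: "linear JV" and JV2: "\<And>v. JV (JV v) = - v" and JVi: "\<And>v w. inner (JV v) (JV w) = inner v w"
    and JVc: "\<And>x v. JV (\<pi> x v) = \<pi> x (JV v)"
    using JV by (auto simp: orthogonal_complex_structure_def intertwiner_def)
  define C where "C = {q :: real \<times> 'h. s = 0 \<longrightarrow> fst q = 0}"
  have "subspace C" by (auto simp: C_def subspace_def)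
  moreover have "even (dim C)" unfolding C_def by (rule even_dim_centre[OF s])
  ultimately obtain JC where JC: "orthogonal_complex_structure C JC"
    using orthogonal_complex_structure_exists by blast
  then have JCl: "linear JC" and JCC: "\<And>q. q \<in> C \<Longrightarrow> JC q \<in> C" and JC2: "\<And>q. q \<in> C \<Longrightarrow> JC (JC q) = - q"
    and JCi: "\<And>q q'. q \<in> C \<Longrightarrow> q' \<in> C \<Longrightarrow> inner (JC q) (JC q') = inner q q'"
    by (auto simp: orthogonal_complex_structure_def)
  define c where "c p = (fst p, fst (snd p))" for p :: "real \<times> 'h \<times> 'v"
  define J where "J p = (fst (JC (c p)), snd (JC (c p)), JV (snd (snd p)))" for p
  have c: "c (p + q) = c p + c q" "c (r *\<^sub>R p) = r *\<^sub>R c p" "c (J p) = JC (c p)" for p q r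
    by (simp_all add: c_def J_def)
  have N: "p \<in> ncarrier s \<longleftrightarrow> c p \<in> C" for p by (simp add: ncarrier_def C_def c_def)
  have inner_split: "inner p q = inner (c p) (c q) + inner (snd (snd p)) (snd (snd q))" for p q
    by (simp add: c_def inner_prod_def)
  have Jl: "linear J" unfolding J_def
    by (rule linearI) (simp_all add: c linear_add[OF JCl] linear_scale[OF JCl] linear_add[OF JVl]
        linear_scale[OF JVl])
  have "J p \<in> ncarrier s" if "p \<in> ncarrier s" for p using JCC[of "c p"] that by (simp add: N c)
  then have JN: "J ` ncarrier s \<subseteq> ncarrier s" by blast
  have JJ: "J (J p) = - p" if "p \<in> ncarrier s" for p
  proof -
    have "c (J (J p)) = - c p" using JC2[of "c p"] that by (simp add: N c)
    then show ?thesis using JV2 by (simp add: J_def c_def prod_eq_iff)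
  qed
  have ab: "abelian_cs (ncarrier s) (nbracket \<pi>) J"
    by (simp add: abelian_cs_def nbracket_def J_def vbracket_isometric_intertwiner[of \<pi>, OF lx JVi JVc])
  have "nbracket \<pi> u (- w) = - nbracket \<pi> u w" for u w
    by (simp add: nbracket_def vbracket_uminus_right[of \<pi>, OF lx])
  with Jl JN JJ ab have "complex_structure_on (ncarrier s) (nbracket \<pi>) J"
    by (rule complex_structure_on_if_abelian)
  moreover have "orthogonal_cs (ncarrier s) J"
    unfolding orthogonal_cs_def
  proof (intro ballI)
    fix u w :: "real \<times> 'h \<times> 'v" assume uw: "u \<in> ncarrier s" "w \<in> ncarrier s"
    have V: "snd (snd (J p)) = JV (snd (snd p))" for p by (simp add: J_def)
    have "inner (J u) (J w) = inner (JC (c u)) (JC (c w)) + inner (JV (snd (snd u))) (JV (snd (snd w)))"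
      by (simp only: inner_split[of "J u"] c(3) V)
    also have "\<dots> = inner u w" using JCi uw by (simp add: N JVi inner_split[of u])
    finally show "inner (J u) (J w) = inner u w" .
  qed
  ultimately show ?thesis using ab by blast
qed

lemma abelian_orthogonal_cs_iff_equivariant_complex_structure:
  fixes \<pi> :: "'h::euclidean_space \<Rightarrow> 'v::euclidean_space \<Rightarrow> 'v"
  assumes pl: "\<And>x. linear (\<pi> x)" and lx: "\<And>v. linear (\<lambda>x. \<pi> x v)" and nt: "no_trivial_part \<pi>"
    and s: "s \<le> 1" "DIM('h) mod 2 = s mod 2"
  shows "(\<exists>J. complex_structure_on (ncarrier s) (nbracket \<pi>) J \<and>
      abelian_cs (ncarrier s) (nbracket \<pi>) J \<and> orthogonal_cs (ncarrier s) J)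
    \<longleftrightarrow> (\<exists>JV. orthogonal_complex_structure UNIV JV \<and> intertwiner \<pi> UNIV UNIV JV)"
proof
  assume "\<exists>J. complex_structure_on (ncarrier s) (nbracket \<pi>) J \<and>
    abelian_cs (ncarrier s) (nbracket \<pi>) J \<and> orthogonal_cs (ncarrier s) J"
  then obtain J where "complex_structure_on (ncarrier s) (nbracket \<pi>) J"
    "abelian_cs (ncarrier s) (nbracket \<pi>) J" "orthogonal_cs (ncarrier s) J"
    by blast
  from equivariant_complex_structure_if_abelian_cs[OF pl lx nt this] show "\<exists>JV. orthogonal_complex_structure UNIV JV \<and> intertwiner \<pi> UNIV UNIV JV"
    by blast
next
  assume "\<exists>JV. orthogonal_complex_structure UNIV JV \<and> intertwiner \<pi> UNIV UNIV JV"
  then obtain JV where "orthogonal_complex_structure UNIV JV" "intertwiner \<pi> UNIV UNIV JV" by blast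
  from abelian_cs_if_equivariant_complex_structure[OF lx this s]
  show "\<exists>J. complex_structure_on (ncarrier s) (nbracket \<pi>) J \<and>
    abelian_cs (ncarrier s) (nbracket \<pi>) J \<and> orthogonal_cs (ncarrier s) J" .
qed

theorem mainTheorem19:
  fixes br :: "'h::euclidean_space \<Rightarrow> 'h \<Rightarrow> 'h"
    and \<pi> :: "'h \<Rightarrow> 'v::euclidean_space \<Rightarrow> 'v"
    and s :: nat
  assumes "lie_algebra br" and "ad_invariant br"
    and "representation br \<pi>" and "faithful \<pi>" and "no_trivial_part \<pi>"
    and "rep_invariant_inner \<pi>"
    and "s \<le> 1" and "DIM('h) mod 2 = s mod 2"
  shows "(\<exists>J. complex_structure_on (ncarrier s) (nbracket \<pi>) J \<and>
              abelian_cs (ncarrier s) (nbracket \<pi>) J \<and>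
              orthogonal_cs (ncarrier s) J)
     \<longleftrightarrow> (\<forall>W Us. irreducible_subrep \<pi> W \<and> real_type \<pi> W \<and> irreducible_decomposition \<pi> Us
              \<longrightarrow> even (multiplicity_in \<pi> Us W))"
proof -
  have pl: "\<And>x. linear (\<pi> x)" and lx: "\<And>v. linear (\<lambda>x. \<pi> x v)"
    using assms(3) by (auto simp: representation_def)
  have "(\<exists>J. complex_structure_on (ncarrier s) (nbracket \<pi>) J \<and>
           abelian_cs (ncarrier s) (nbracket \<pi>) J \<and> orthogonal_cs (ncarrier s) J)
      \<longleftrightarrow> (\<exists>JV. orthogonal_complex_structure UNIV JV \<and> intertwiner \<pi> UNIV UNIV JV)"
    by (rule abelian_orthogonal_cs_iff_equivariant_complex_structure[OF pl lx assms(5,7,8)])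
  also have "\<dots> \<longleftrightarrow> even_real_multiplicities \<pi> UNIV"
    by (rule equivariant_complex_structure_iff_even_real_multiplicities[OF assms(6) pl])
  finally show ?thesis
    by (simp add: even_real_multiplicities_def irreducible_decomposition_on_UNIV)
qed

end
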